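(* Let $E$ be a Borel space and $Q$ a semi-Markov kernel on $\mathbb{R}_+\times E$ given $E$ satisfying the regularity condition: there exist $\delta>0$ and $\epsilon>0$ such that $Q(\delta,E\mid x)\le 1-\epsilon$ for all $x\in E$. Let $c,g:E\to[0,\infty)$ be measurable, fix $T\in\mathbb{R}_+$, and let $V^*$ be the optimal stopping value function described in the context. Define $V^*_0\equiv 0$ on $[0,T]\times E$ and $V^*_{n+1}=\mathbb{G}V^*_n$ for $n\ge 0$. Then $V^*(s,x)=\lim_{n\to\infty}V^*_n(s,x)$ for all $(s,x)\in[0,T]\times E$, and moreover $V^*=\mathbb{G}V^*$ on $[0,T]\times E$.
   Context: Semi-Markov kernel: for each $B\in\mathcal{B}(E)$ and $x\in E$, $t\mapsto Q(t,B\mid x)$ is nondecreasing, right-continuous on $\mathbb{R}_+$ with $Q(0,B\mid x)=0$; for each $t$, $Q(t,\cdot\mid\cdot)$ is a substochastic kernel on $E$; $\lim_{t\to\infty}Q(t,\cdot\mid\cdot)$ is a stochastic kernel on $E$. Let $\Omega=\{(x_0,t_1,x_1,t_2,x_2,\dots): x_0\in E,\ (t_n,x_n)\in\mathbb{R}_+\times E\}$ with its product Borel $\sigma$-algebra; $X_n(\omega)=x_n$, $T_0=0$, $T_{n+1}(\omega)=t_{n+1}$, $S_n=\sum_{k=0}^n T_k$, $Y_n=(X_0,T_1,X_1,\dots,T_n,X_n)$, $\mathcal{F}_n=\sigma(T_0,X_0,\dots,T_n,X_n)$. For $x\in E$, $\mathbb{P}_x$ is the unique probability measure on $\Omega$ with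 $\mathbb{P}_x(T_0=0,X_0=x)=1$ and $\mathbb{P}_x(T_{n+1}\le t,X_{n+1}\in B\mid Y_n)=Q(t,B\mid X_n)$; $\mathbb{E}_x$ is its expectation. The process $X(t)=X_n$ for $S_n\le t<S_{n+1}$. A stopping time is a map $\tau:\Omega\to\mathbb{N}\cup\{+\infty\}$ ($\mathbb{N}=\{0,1,2,\dots\}$) with $\{\tau=n\}\in\mathcal{F}_n$ for all $n\in\mathbb{N}$; $\Gamma$ is the set of stopping times. For a horizon $s\in\mathbb{R}_+$ and $\tau\in\Gamma$, $R^s_\tau=\int_0^{S_\tau}c(X(t))\,dt+g(X(S_\tau))$ if $S_\tau<s$ and $R^s_\tau=\int_0^s c(X(t))\,dt$ if $S_\tau\ge s$ (with $S_\tau=\lim_n S_n$ on $\{\tau=\infty\}$); $V^\tau(s,x)=\mathbb{E}_x[R^s_\tau]$ and $V^*(s,x)=\inf_{\tau\in\Gamma}V^\tau(s,x)$. For a Borel function $u:[0,T]\times E\to[0,\infty]$, $\mathbb{G}u(s,x)=\min\Big\{c(x)\int_0^s(1-Q(t,E\mid x))\,dt+\int_E\int_{[0,s]}u(s-t,y)\,Q(dt,dy\mid x),\ g(x)\Big\}$. *)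

theory Defs
  imports "HOL-Probability.Probability"
begin

definition subprob_kernel :: "'e measure \<Rightarrow> ('e set \<Rightarrow> 'e \<Rightarrow> real) \<Rightarrow> bool" where
  "subprob_kernel M K \<longleftrightarrow>
     (\<forall>x\<in>space M. \<exists>\<mu>. subprob_space \<mu> \<and> sets \<mu> = sets M \<and> (\<forall>B\<in>sets M. K B x = measure \<mu> B)) \<and>
     (\<forall>B\<in>sets M. (\<lambda>x. K B x) \<in> borel_measurable M)"

definition prob_kernel :: "'e measure \<Rightarrow> ('e set \<Rightarrow> 'e \<Rightarrow> real) \<Rightarrow> bool" where
  "prob_kernel M K \<longleftrightarrow>
     (\<forall>x\<in>space M. \<exists>\<mu>. prob_space \<mu> \<and> sets \<mu> = sets M \<and> (\<forall>B\<in>sets M. K B x = measure \<mu> B)) \<and>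
     (\<forall>B\<in>sets M. (\<lambda>x. K B x) \<in> borel_measurable M)"

text \<open>Semi-Markov kernel: Q t B x stands for Q(t,B|x); only t \<ge> 0 is relevant.\<close>
definition semi_markov_kernel :: "'e measure \<Rightarrow> (real \<Rightarrow> 'e set \<Rightarrow> 'e \<Rightarrow> real) \<Rightarrow> bool" where
  "semi_markov_kernel M Q \<longleftrightarrow>
     (\<forall>B\<in>sets M. \<forall>x\<in>space M.
        mono_on {0..} (\<lambda>t. Q t B x) \<and>
        (\<forall>t\<ge>0. continuous (at_right t) (\<lambda>t. Q t B x)) \<and>
        Q 0 B x = 0) \<and>
     (\<forall>t\<ge>0. subprob_kernel M (Q t)) \<and>
     (\<exists>Qi. (\<forall>B\<in>sets M. \<forall>x\<in>space M. ((\<lambda>t. Q t B x) \<longlongrightarrow> Qi B x) at_top) \<and> prob_kernel M Qi)"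

text \<open>The measure Q(dt,dy|x) on R x E determined by Q(t,B|x) (no mass on negative times).\<close>
definition Qmeas :: "'e measure \<Rightarrow> (real \<Rightarrow> 'e set \<Rightarrow> 'e \<Rightarrow> real) \<Rightarrow> 'e \<Rightarrow> (real \<times> 'e) measure" where
  "Qmeas M Q x = (THE \<mu>. sets \<mu> = sets (borel \<Otimes>\<^sub>M M) \<and> finite_measure \<mu> \<and>
      (\<forall>t. \<forall>B\<in>sets M. emeasure \<mu> ({..t} \<times> B) = ennreal (if t < 0 then 0 else Q t B x)))"

text \<open>omega n = (t_n, x_n); coordinate 0 is (T_0, X_0).\<close>
definition path_space :: "'e measure \<Rightarrow> (nat \<Rightarrow> real \<times> 'e) measure" where
  "path_space M = PiM UNIV (\<lambda>_. borel \<Otimes>\<^sub>M M)"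

definition Tn :: "nat \<Rightarrow> (nat \<Rightarrow> real \<times> 'e) \<Rightarrow> real" where
  "Tn n \<omega> = fst (\<omega> n)"

definition Xn :: "nat \<Rightarrow> (nat \<Rightarrow> real \<times> 'e) \<Rightarrow> 'e" where
  "Xn n \<omega> = snd (\<omega> n)"

definition Sn :: "nat \<Rightarrow> (nat \<Rightarrow> real \<times> 'e) \<Rightarrow> real" where
  "Sn n \<omega> = (\<Sum>k\<le>n. Tn k \<omega>)"

definition Fn :: "'e measure \<Rightarrow> nat \<Rightarrow> (nat \<Rightarrow> real \<times> 'e) measure" where
  "Fn M n = vimage_algebra (space (path_space M)) (\<lambda>\<omega>. restrict \<omega> {..n}) (PiM {..n} (\<lambda>_. borel \<Otimes>\<^sub>M M))"

definition stopping_times :: "'e measure \<Rightarrow> ((nat \<Rightarrow> real \<times> 'e) \<Rightarrow> enat) set" where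
  "stopping_times M = {\<tau>. \<forall>n. {\<omega>\<in>space (path_space M). \<tau> \<omega> = enat n} \<in> sets (Fn M n)}"

text \<open>S_tau, with S_infinity = lim S_n (= sup, the T_k being nonnegative).\<close>
definition S_tau :: "((nat \<Rightarrow> real \<times> 'e) \<Rightarrow> enat) \<Rightarrow> (nat \<Rightarrow> real \<times> 'e) \<Rightarrow> ereal" where
  "S_tau \<tau> \<omega> = (case \<tau> \<omega> of enat n \<Rightarrow> ereal (Sn n \<omega>) | \<infinity> \<Rightarrow> (SUP n. ereal (Sn n \<omega>)))"

definition Xproc :: "(nat \<Rightarrow> real \<times> 'e) \<Rightarrow> real \<Rightarrow> 'e" where
  "Xproc \<omega> t = Xn (LEAST n. t < Sn (Suc n) \<omega>) \<omega>"

definition reward :: "('e \<Rightarrow> real) \<Rightarrow> ('e \<Rightarrow> real) \<Rightarrow> real \<Rightarrow> ((nat \<Rightarrow> real \<times> 'e) \<Rightarrow> enat)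
    \<Rightarrow> (nat \<Rightarrow> real \<times> 'e) \<Rightarrow> ennreal" where
  "reward c g s \<tau> \<omega> =
     (if S_tau \<tau> \<omega> < ereal s
      then (\<integral>\<^sup>+ t\<in>{0..real_of_ereal (S_tau \<tau> \<omega>)}. ennreal (c (Xproc \<omega> t)) \<partial>lborel)
           + ennreal (g (Xproc \<omega> (real_of_ereal (S_tau \<tau> \<omega>))))
      else (\<integral>\<^sup>+ t\<in>{0..s}. ennreal (c (Xproc \<omega> t)) \<partial>lborel))"

definition Vtau :: "('e \<Rightarrow> (nat \<Rightarrow> real \<times> 'e) measure) \<Rightarrow> ('e \<Rightarrow> real) \<Rightarrow> ('e \<Rightarrow> real)
    \<Rightarrow> ((nat \<Rightarrow> real \<times> 'e) \<Rightarrow> enat) \<Rightarrow> real \<Rightarrow> 'e \<Rightarrow> ennreal" where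
  "Vtau P c g \<tau> s x = (\<integral>\<^sup>+ \<omega>. reward c g s \<tau> \<omega> \<partial>P x)"

definition Vstar :: "'e measure \<Rightarrow> ('e \<Rightarrow> (nat \<Rightarrow> real \<times> 'e) measure) \<Rightarrow> ('e \<Rightarrow> real) \<Rightarrow> ('e \<Rightarrow> real)
    \<Rightarrow> real \<Rightarrow> 'e \<Rightarrow> ennreal" where
  "Vstar M P c g s x = (INF \<tau>\<in>stopping_times M. Vtau P c g \<tau> s x)"

definition semi_markov_laws :: "'e measure \<Rightarrow> (real \<Rightarrow> 'e set \<Rightarrow> 'e \<Rightarrow> real)
    \<Rightarrow> ('e \<Rightarrow> (nat \<Rightarrow> real \<times> 'e) measure) \<Rightarrow> bool" where
  "semi_markov_laws M Q P \<longleftrightarrow> (\<forall>x\<in>space M.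
     prob_space (P x) \<and> sets (P x) = sets (path_space M) \<and>
     (AE \<omega> in P x. \<omega> 0 = (0, x)) \<and>
     (\<forall>n. \<forall>A\<in>sets (Fn M n). \<forall>t\<ge>0. \<forall>B\<in>sets M.
        emeasure (P x) (A \<inter> {\<omega>\<in>space (path_space M). Tn (Suc n) \<omega> \<le> t \<and> Xn (Suc n) \<omega> \<in> B})
        = (\<integral>\<^sup>+ \<omega>\<in>A. ennreal (Q t B (Xn n \<omega>)) \<partial>P x)))"

definition Gop :: "'e measure \<Rightarrow> (real \<Rightarrow> 'e set \<Rightarrow> 'e \<Rightarrow> real) \<Rightarrow> ('e \<Rightarrow> real) \<Rightarrow> ('e \<Rightarrow> real)
    \<Rightarrow> (real \<Rightarrow> 'e \<Rightarrow> ennreal) \<Rightarrow> real \<Rightarrow> 'e \<Rightarrow> ennreal" where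
  "Gop M Q c g u s x =
     min (ennreal (c x) * (\<integral>\<^sup>+ t\<in>{0..s}. ennreal (1 - Q t (space M) x) \<partial>lborel)
          + (\<integral>\<^sup>+ p. indicator {0..s} (fst p) * u (s - fst p) (snd p) \<partial>Qmeas M Q x))
         (ennreal (g x))"

definition Vn :: "'e measure \<Rightarrow> (real \<Rightarrow> 'e set \<Rightarrow> 'e \<Rightarrow> real) \<Rightarrow> ('e \<Rightarrow> real) \<Rightarrow> ('e \<Rightarrow> real)
    \<Rightarrow> nat \<Rightarrow> real \<Rightarrow> 'e \<Rightarrow> ennreal" where
  "Vn M Q c g n = (Gop M Q c g ^^ n) (\<lambda>_ _. 0)"

end

theory Submission
  imports Defs
begin

text \<open>Write V_inf for the supremum of the increasing sequence V_n. Since G is monotone and commutes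
  with increasing limits (monotone convergence), V_inf is a fixed point of G. For a stopping time \<tau>,
  integrating out one jump at a time with the Markov property of the jump chain shows that V_n(s,x)
  is at most the expected reward of \<tau> collected up to the n-th jump, hence at most the value of \<tau>.
  Conversely, for the rule that stops at the first jump k where g(X_k) does not exceed the cost of
  continuing with V_inf over the remaining horizon s - S_k, the same expectations with V_inf as value
  to go do not increase in k, so this rule costs at most V_inf. Both comparisons pass from rewards
  collected up to finitely many jumps to the full reward because the regularity condition makes
  S_n tend to infinity almost surely.\<close>

definition lower_rects :: "'e measure \<Rightarrow> (real \<times> 'e) set set" where
  "lower_rects M = {{..t} \<times> B | t B. B \<in> sets M}"

lemma lower_rects_subset: "lower_rects M \<subseteq> Pow (UNIV \<times> space M)"
  unfolding lower_rects_def using sets.sets_into_space by fastforce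

lemma Int_stable_lower_rects: "Int_stable (lower_rects M)"
proof (rule Int_stableI)
  fix a b assume "a \<in> lower_rects M" "b \<in> lower_rects M"
  then obtain t B t' B' where "a = {..t} \<times> B" "B \<in> sets M" "b = {..t'} \<times> B'" "B' \<in> sets M"
    unfolding lower_rects_def by blast
  then have "a \<inter> b = {..min t t'} \<times> (B \<inter> B')" "B \<inter> B' \<in> sets M" by auto
  then show "a \<inter> b \<in> lower_rects M" unfolding lower_rects_def by blast
qed

lemma lower_rects_exhausting:
  "range (\<lambda>i::nat. {..real i} \<times> space M) \<subseteq> lower_rects M"
  "(\<Union>i::nat. {..real i} \<times> space M) = UNIV \<times> space M"
  by (auto simp: lower_rects_def intro: real_arch_simple)

lemma sets_pair_borel_lower_rects:
  "sets (borel \<Otimes>\<^sub>M M) = sigma_sets (UNIV \<times> space M) (lower_rects M)"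
proof -
  have "sets (borel \<Otimes>\<^sub>M M) = sets (sigma UNIV (range (\<lambda>a::real. {..a})) \<Otimes>\<^sub>M sigma (space M) (sets M))"
    by (rule sets_pair_measure_cong) (simp_all add: borel_eq_atMost)
  also have "\<dots> = sets (sigma (UNIV \<times> space M) {a \<times> b | a b. a \<in> range (\<lambda>a::real. {..a}) \<and> b \<in> sets M})"
  proof (rule arg_cong[where f=sets], rule sigma_prod)
    show "\<exists>E\<subseteq>range (\<lambda>a::real. {..a}). countable E \<and> UNIV = \<Union> E"
      by (rule exI[of _ "range (\<lambda>n::nat. {..real n})"]) (auto intro: real_arch_simple)
    show "\<exists>E\<subseteq>sets M. countable E \<and> space M = \<Union> E"
      by (rule exI[of _ "{space M}"]) auto
  qed (auto dest: sets.sets_into_space)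
  also have "\<dots> = sigma_sets (UNIV \<times> space M) {a \<times> b | a b. a \<in> range (\<lambda>a::real. {..a}) \<and> b \<in> sets M}"
    by (rule sets_measure_of) (auto dest: sets.sets_into_space)
  also have "{a \<times> b | a b. a \<in> range (\<lambda>a::real. {..a}) \<and> b \<in> sets M} = lower_rects M"
    by (auto simp: lower_rects_def)
  finally show ?thesis .
qed

definition lower_rects_over :: "'a measure \<Rightarrow> 'e measure \<Rightarrow> ('a \<times> real \<times> 'e) set set" where
  "lower_rects_over F M = {A \<times> G | A G. A \<in> sets F \<and> G \<in> lower_rects M}"

lemma lower_rects_over_subset: "lower_rects_over F M \<subseteq> Pow (space F \<times> (UNIV \<times> space M))"
  using lower_rects_subset sets.sets_into_space unfolding lower_rects_over_def by fastforce

lemma Int_stable_lower_rects_over: "Int_stable (lower_rects_over F M)"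
proof (rule Int_stableI)
  fix a b assume "a \<in> lower_rects_over F M" "b \<in> lower_rects_over F M"
  then obtain A G A' G' where a: "a = A \<times> G" "A \<in> sets F" "G \<in> lower_rects M"
    and b: "b = A' \<times> G'" "A' \<in> sets F" "G' \<in> lower_rects M"
    unfolding lower_rects_over_def by blast
  have "G \<inter> G' \<in> lower_rects M" using Int_stable_lower_rects a b unfolding Int_stable_def by blast
  moreover have "a \<inter> b = (A \<inter> A') \<times> (G \<inter> G')" using a b by auto
  ultimately show "a \<inter> b \<in> lower_rects_over F M" using a b unfolding lower_rects_over_def by blast
qed

lemma sets_pair_lower_rects_over:
  "sets (F \<Otimes>\<^sub>M (borel \<Otimes>\<^sub>M M)) = sigma_sets (space F \<times> (UNIV \<times> space M)) (lower_rects_over F M)"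
proof -
  have "sets (F \<Otimes>\<^sub>M (borel \<Otimes>\<^sub>M M)) = sets (sigma (space F) (sets F) \<Otimes>\<^sub>M sigma (UNIV \<times> space M) (lower_rects M))"
  proof (rule sets_pair_measure_cong)
    show "sets F = sets (sigma (space F) (sets F))"
      using sets.sigma_sets_eq[of F] sets.space_closed[of F] by simp
    show "sets (borel \<Otimes>\<^sub>M M) = sets (sigma (UNIV \<times> space M) (lower_rects M))"
      using sets_pair_borel_lower_rects[of M] lower_rects_subset[of M] by simp
  qed
  also have "\<dots> = sets (sigma (space F \<times> (UNIV \<times> space M)) (lower_rects_over F M))"
    unfolding lower_rects_over_def
  proof (rule arg_cong[where f=sets], rule sigma_prod)
    show "\<exists>E\<subseteq>sets F. countable E \<and> space F = \<Union> E"
      by (rule exI[of _ "{space F}"]) auto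
    show "\<exists>E\<subseteq>lower_rects M. countable E \<and> UNIV \<times> space M = \<Union> E"
      by (rule exI[of _ "range (\<lambda>i::nat. {..real i} \<times> space M)"]) (simp add: lower_rects_exhausting)
  qed (use lower_rects_subset sets.space_closed[of F] in auto)
  also have "\<dots> = sigma_sets (space F \<times> (UNIV \<times> space M)) (lower_rects_over F M)"
    by (rule sets_measure_of) (use lower_rects_over_subset in blast)
  finally show ?thesis .
qed

lemma measurable_Pair_from:
  assumes "sets K = sets N" "\<omega> \<in> space F"
  shows "Pair \<omega> \<in> measurable K (F \<Otimes>\<^sub>M N)"
proof -
  have "Pair \<omega> \<in> measurable N (F \<Otimes>\<^sub>M N)" using assms(2) by (rule measurable_Pair1')
  then show ?thesis by (simp only: measurable_cong_sets[OF assms(1) refl])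
qed

lemma emeasure_distr_Pair_Times:
  assumes K: "sets K = sets N" and \<omega>: "\<omega> \<in> space F" and A: "A \<in> sets F" and R: "R \<in> sets N"
  shows "emeasure (distr K (F \<Otimes>\<^sub>M N) (Pair \<omega>)) (A \<times> R) = indicator A \<omega> * emeasure K R"
proof -
  have "emeasure (distr K (F \<Otimes>\<^sub>M N) (Pair \<omega>)) (A \<times> R) = emeasure K (Pair \<omega> -` (A \<times> R) \<inter> space K)"
    using A R by (intro emeasure_distr measurable_Pair_from[OF K \<omega>]) auto
  also have "\<dots> = indicator A \<omega> * emeasure K R"
    using sets.sets_into_space[OF R] sets_eq_imp_space_eq[OF K] by (auto simp: indicator_def Int_absorb2)
  finally show ?thesis .
qed

lemma nn_integral_distr_Pair:
  assumes K: "sets K = sets N" and \<omega>: "\<omega> \<in> space F" and H: "H \<in> borel_measurable (F \<Otimes>\<^sub>M N)"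
  shows "(\<integral>\<^sup>+ z. H z \<partial>distr K (F \<Otimes>\<^sub>M N) (Pair \<omega>)) = (\<integral>\<^sup>+ p. H (\<omega>, p) \<partial>K)"
  by (rule nn_integral_distr[OF measurable_Pair_from[OF K \<omega>]])
     (simp only: measurable_cong_sets[OF sets_distr refl] H)

lemma measurable_uncurry_compose:
  assumes u: "(\<lambda>z. u (fst z) (snd z)) \<in> borel_measurable (N \<Otimes>\<^sub>M M)"
    and a: "a \<in> measurable K N" and b: "b \<in> measurable K M"
  shows "(\<lambda>x. u (a x) (b x)) \<in> borel_measurable K"
  using measurable_compose[OF measurable_Pair[OF a b] u] by simp

lemma measurable_indicator_before_jump:
  fixes r :: real and M :: "'e measure"
  shows "(\<lambda>(t, p :: real \<times> 'e). indicator {0..r} t * indicator {p. t < fst p} p :: ennreal)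
     \<in> borel_measurable (borel \<Otimes>\<^sub>M (borel \<Otimes>\<^sub>M M))"
proof -
  have "{z \<in> space (borel \<Otimes>\<^sub>M (borel \<Otimes>\<^sub>M M)). fst z < (fst (snd z) :: real)}
      \<in> sets (borel \<Otimes>\<^sub>M (borel \<Otimes>\<^sub>M M))"
    by measurable
  then show ?thesis
    by (simp add: split_beta' indicator_def[of "{p. _ < fst p}"] borel_measurable_indicator'[unfolded indicator_def])
      measurable
qed

lemma emeasure_lborel_atLeastAtMost_Int_lessThan:
  assumes "0 < a"
  shows "emeasure lborel ({0..r} \<inter> {..<a}) = ennreal (min a r)"
proof (cases "r < 0")
  case True
  then show ?thesis by (simp add: ennreal_neg)
next
  case False
  show ?thesis
  proof (cases "a \<le> r")
    case True
    then have "{0..r} \<inter> {..<a} = {0..<a}" by auto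
    then show ?thesis using True assms by simp
  next
    case a_gt: False
    then have "{0..r} \<inter> {..<a} = {0..r}" by auto
    then show ?thesis using a_gt False by simp
  qed
qed

lemma space_path_space: "space (path_space M) = UNIV \<rightarrow>\<^sub>E (UNIV \<times> space M)"
  by (simp add: path_space_def space_PiM space_pair_measure)

lemma Xn_in_space: "\<omega> \<in> space (path_space M) \<Longrightarrow> Xn j \<omega> \<in> space M"
  unfolding space_path_space Xn_def by (auto simp: PiE_iff mem_Times_iff)

lemma measurable_path_component[measurable]:
  "(\<lambda>\<omega>. \<omega> j) \<in> measurable (path_space M) (borel \<Otimes>\<^sub>M M)"
  unfolding path_space_def by (rule measurable_component_singleton) simp

lemma Tn_measurable[measurable]: "Tn j \<in> borel_measurable (path_space M)"
  unfolding Tn_def by measurable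

lemma Xn_measurable[measurable]: "Xn j \<in> measurable (path_space M) M"
  unfolding Xn_def by measurable

lemma Sn_measurable[measurable]: "Sn j \<in> borel_measurable (path_space M)"
  unfolding Sn_def by measurable

lemma space_Fn[simp]: "space (Fn M n) = space (path_space M)"
  by (simp add: Fn_def)

lemma measurable_component_Fn:
  assumes "j \<le> n"
  shows "(\<lambda>\<omega>. \<omega> j) \<in> measurable (Fn M n) (borel \<Otimes>\<^sub>M M)"
proof -
  have "(\<lambda>\<omega>. restrict \<omega> {..n}) \<in> space (path_space M) \<rightarrow> space (Pi\<^sub>M {..n} (\<lambda>_. borel \<Otimes>\<^sub>M M))"
    by (force simp: space_path_space space_PiM space_pair_measure PiE_iff)
  then have "(\<lambda>\<omega>. (restrict \<omega> {..n}) j) \<in> measurable (Fn M n) (borel \<Otimes>\<^sub>M M)"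
    unfolding Fn_def
    by (rule measurable_compose[OF measurable_vimage_algebra1])
       (rule measurable_component_singleton, simp add: assms)
  then show ?thesis using assms by simp
qed

lemma sets_Fn_subset: "sets (Fn M n) \<subseteq> sets (path_space M)"
  unfolding Fn_def
  by (rule sets_image_in_sets) (auto simp: path_space_def intro!: measurable_restrict_subset)

lemma sets_Fn_mono:
  assumes "j \<le> n"
  shows "sets (Fn M j) \<subseteq> sets (Fn M n)"
proof -
  have "(\<lambda>\<omega>. restrict \<omega> {..j}) \<in> measurable (Fn M n) (Pi\<^sub>M {..j} (\<lambda>_. borel \<Otimes>\<^sub>M M))"
    by (rule measurable_restrict) (rule measurable_component_Fn, use assms in auto)
  then show ?thesis unfolding Fn_def[of M j]
    by (intro sets_image_in_sets) auto
qed

lemma measurable_Fn_imp_path_space: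
  "f \<in> measurable (Fn M n) K \<Longrightarrow> f \<in> measurable (path_space M) K"
  by (rule measurable_from_subalg) (auto simp: subalgebra_def sets_Fn_subset)

lemma measurable_Fn_mono:
  "f \<in> measurable (Fn M j) K \<Longrightarrow> j \<le> n \<Longrightarrow> f \<in> measurable (Fn M n) K"
  by (rule measurable_from_subalg) (auto simp: subalgebra_def sets_Fn_mono)

lemma Tn_measurable_Fn: "j \<le> n \<Longrightarrow> Tn j \<in> borel_measurable (Fn M n)"
  unfolding Tn_def by (rule measurable_compose[OF measurable_component_Fn]) auto

lemma Xn_measurable_Fn: "j \<le> n \<Longrightarrow> Xn j \<in> measurable (Fn M n) M"
  unfolding Xn_def by (rule measurable_compose[OF measurable_component_Fn]) auto

lemma Sn_measurable_Fn: "j \<le> n \<Longrightarrow> Sn j \<in> borel_measurable (Fn M n)"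
  unfolding Sn_def by (intro borel_measurable_sum Tn_measurable_Fn) simp

lemma enat_less_iff: "enat n < t \<longleftrightarrow> (\<forall>j\<le>n. t \<noteq> enat j)"
proof (cases t)
  case (enat m)
  have "n < m \<longleftrightarrow> (\<forall>j\<le>n. m \<noteq> j)" by (metis not_less order_refl)
  then show ?thesis by (simp add: enat)
qed simp

lemma stopping_time_eq_Fn:
  "\<tau> \<in> stopping_times M \<Longrightarrow> j \<le> n \<Longrightarrow> Measurable.pred (Fn M n) (\<lambda>\<omega>. \<tau> \<omega> = enat j)"
  using sets_Fn_mono[of j n M] unfolding stopping_times_def pred_def by auto

lemma stopping_time_greater_Fn:
  assumes "\<tau> \<in> stopping_times M"
  shows "Measurable.pred (Fn M n) (\<lambda>\<omega>. enat n < \<tau> \<omega>)"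
proof -
  have "{\<omega> \<in> space (Fn M n). enat n < \<tau> \<omega>}
      = space (Fn M n) - (\<Union>j\<in>{..n}. {\<omega> \<in> space (Fn M n). \<tau> \<omega> = enat j})"
    by (auto simp: enat_less_iff)
  also have "\<dots> \<in> sets (Fn M n)"
    using stopping_time_eq_Fn[OF assms] sets.top[of "Fn M n"] unfolding pred_def
    by (intro sets.Diff sets.finite_UN) auto
  finally show ?thesis unfolding pred_def .
qed

section \<open>Rewards along a path\<close>

definition proper_path :: "(nat \<Rightarrow> real \<times> 'e) \<Rightarrow> bool" where
  "proper_path \<omega> \<longleftrightarrow> Tn 0 \<omega> = 0 \<and> (\<forall>j. 0 < Tn (Suc j) \<omega>)"

lemma Sn_Suc: "Sn (Suc j) \<omega> = Sn j \<omega> + Tn (Suc j) \<omega>"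
  by (simp add: Sn_def)

lemma Sn_0: "proper_path \<omega> \<Longrightarrow> Sn 0 \<omega> = 0"
  by (simp add: Sn_def proper_path_def)

lemma strict_mono_Sn: "proper_path \<omega> \<Longrightarrow> strict_mono (\<lambda>j. Sn j \<omega>)"
  by (rule strict_monoI_Suc) (simp add: Sn_Suc proper_path_def)

lemma Sn_mono: "proper_path \<omega> \<Longrightarrow> j \<le> k \<Longrightarrow> Sn j \<omega> \<le> Sn k \<omega>"
  using strict_mono_Sn strict_mono_less_eq by blast

lemma Sn_nonneg: "proper_path \<omega> \<Longrightarrow> 0 \<le> Sn j \<omega>"
  using Sn_mono[of \<omega> 0 j] Sn_0[of \<omega>] by simp

lemma Xproc_eq_Xn:
  assumes \<omega>: "proper_path \<omega>" and "Sn j \<omega> \<le> t" "t < Sn (Suc j) \<omega>"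
  shows "Xproc \<omega> t = Xn j \<omega>"
proof -
  have "(LEAST m. t < Sn (Suc m) \<omega>) = j"
  proof (rule Least_equality)
    fix m assume "t < Sn (Suc m) \<omega>"
    then show "j \<le> m"
      using assms Sn_mono[OF \<omega>, of "Suc m" j] by (metis not_less_eq_eq order.strict_trans2 order_less_irrefl)
  qed fact
  then show ?thesis by (simp add: Xproc_def)
qed

definition running_cost :: "('e \<Rightarrow> real) \<Rightarrow> real \<Rightarrow> nat \<Rightarrow> (nat \<Rightarrow> real \<times> 'e) \<Rightarrow> ennreal" where
  "running_cost c s k \<omega> =
     (\<Sum>j<k. ennreal (c (Xn j \<omega>)) * ennreal (min (Sn (Suc j) \<omega>) s - min (Sn j \<omega>) s))"

lemma running_cost_Suc:
  "running_cost c s (Suc k) \<omega>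
     = running_cost c s k \<omega> + ennreal (c (Xn k \<omega>)) * ennreal (min (Sn (Suc k) \<omega>) s - min (Sn k \<omega>) s)"
  by (simp add: running_cost_def)

lemma running_cost_mono: "j \<le> k \<Longrightarrow> running_cost c s j \<omega> \<le> running_cost c s k \<omega>"
  unfolding running_cost_def by (rule sum_mono2) auto

lemma cost_indicator_eq_sum:
  assumes \<omega>: "proper_path \<omega>" and s: "0 \<le> s"
  shows "ennreal (c (Xproc \<omega> t)) * indicator {0..<min (Sn k \<omega>) s} t
       = (\<Sum>j<k. ennreal (c (Xn j \<omega>)) * indicator {min (Sn j \<omega>) s..<min (Sn (Suc j) \<omega>) s} t)"
proof (induction k)
  case 0
  then show ?case using Sn_0[OF \<omega>] s by simp
next
  case (Suc k)
  let ?a = "min (Sn k \<omega>) s" and ?b = "min (Sn (Suc k) \<omega>) s"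
  have "0 \<le> ?a" "?a \<le> ?b"
    using Sn_nonneg[OF \<omega>, of k] Sn_mono[OF \<omega>, of k "Suc k"] s by auto
  then have split: "indicator {0..<?b} t = (indicator {0..<?a} t + indicator {?a..<?b} t :: ennreal)"
    by (auto simp: indicator_def)
  have "Xproc \<omega> t = Xn k \<omega>" if "t \<in> {?a..<?b}"
    using that by (intro Xproc_eq_Xn[OF \<omega>]) auto
  then have "ennreal (c (Xproc \<omega> t)) * indicator {?a..<?b} t = ennreal (c (Xn k \<omega>)) * indicator {?a..<?b} t"
    by (cases "t \<in> {?a..<?b}") simp_all
  then show ?case using Suc.IH by (simp add: split distrib_left)
qed

lemma nn_set_integral_atLeastAtMost_eq_atLeastLessThan:
  fixes a b :: real
  shows "(\<integral>\<^sup>+ t\<in>{a..b}. f t \<partial>lborel) = (\<integral>\<^sup>+ t\<in>{a..<b}. f t \<partial>lborel)"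
proof (rule nn_integral_cong_AE)
  show "AE t in lborel. f t * indicator {a..b} t = f t * indicator {a..<b} t"
    using AE_lborel_singleton[of b] by eventually_elim (auto simp: indicator_def)
qed

lemma nn_integral_cost_eq_running_cost:
  assumes \<omega>: "proper_path \<omega>" and s: "0 \<le> s"
  shows "(\<integral>\<^sup>+ t\<in>{0..min (Sn k \<omega>) s}. ennreal (c (Xproc \<omega> t)) \<partial>lborel) = running_cost c s k \<omega>"
proof -
  have "(\<integral>\<^sup>+ t\<in>{0..min (Sn k \<omega>) s}. ennreal (c (Xproc \<omega> t)) \<partial>lborel)
      = (\<integral>\<^sup>+ t. (\<Sum>j<k. ennreal (c (Xn j \<omega>)) * indicator {min (Sn j \<omega>) s..<min (Sn (Suc j) \<omega>) s} t) \<partial>lborel)"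
    by (simp only: nn_set_integral_atLeastAtMost_eq_atLeastLessThan cost_indicator_eq_sum[OF \<omega> s])
  also have "\<dots> = (\<Sum>j<k. \<integral>\<^sup>+ t. ennreal (c (Xn j \<omega>)) * indicator {min (Sn j \<omega>) s..<min (Sn (Suc j) \<omega>) s} t \<partial>lborel)"
    by (rule nn_integral_sum) simp
  also have "\<dots> = (\<Sum>j<k. ennreal (c (Xn j \<omega>)) * emeasure lborel {min (Sn j \<omega>) s..<min (Sn (Suc j) \<omega>) s})"
    by (intro sum.cong refl nn_integral_cmult_indicator) simp
  also have "\<dots> = running_cost c s k \<omega>"
    unfolding running_cost_def
  proof (intro sum.cong refl)
    fix j
    have "min (Sn j \<omega>) s \<le> min (Sn (Suc j) \<omega>) s" using Sn_mono[OF \<omega>, of j "Suc j"] by linarith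
    then show "ennreal (c (Xn j \<omega>)) * emeasure lborel {min (Sn j \<omega>) s..<min (Sn (Suc j) \<omega>) s}
        = ennreal (c (Xn j \<omega>)) * ennreal (min (Sn (Suc j) \<omega>) s - min (Sn j \<omega>) s)"
      by simp
  qed
  finally show ?thesis .
qed

lemma reward_stopped:
  assumes \<omega>: "proper_path \<omega>" and s: "0 \<le> s" and \<tau>: "\<tau> \<omega> = enat j"
  shows "reward c g s \<tau> \<omega> = running_cost c s j \<omega> + (if Sn j \<omega> < s then ennreal (g (Xn j \<omega>)) else 0)"
proof (cases "Sn j \<omega> < s")
  case True
  then have "min (Sn j \<omega>) s = Sn j \<omega>" by simp
  moreover have "Xproc \<omega> (Sn j \<omega>) = Xn j \<omega>"
    using strict_mono_Sn[OF \<omega>] by (intro Xproc_eq_Xn[OF \<omega>]) (auto dest: strict_monoD)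
  ultimately show ?thesis
    using True nn_integral_cost_eq_running_cost[OF \<omega> s, where k=j and c=c] by (simp add: reward_def S_tau_def \<tau>)
next
  case False
  then have "min (Sn j \<omega>) s = s" by simp
  then show ?thesis
    using False nn_integral_cost_eq_running_cost[OF \<omega> s, where k=j and c=c] by (simp add: reward_def S_tau_def \<tau>)
qed

lemma reward_never_stopped:
  assumes \<omega>: "proper_path \<omega>" and s: "0 \<le> s" and \<tau>: "\<tau> \<omega> = \<infinity>" and m: "s \<le> Sn m \<omega>"
  shows "reward c g s \<tau> \<omega> = running_cost c s m \<omega>"
proof -
  have "ereal s \<le> (SUP n. ereal (Sn n \<omega>))"
    using m by (intro SUP_upper2[of m]) auto
  then have "\<not> S_tau \<tau> \<omega> < ereal s" by (simp add: S_tau_def \<tau> not_less)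
  moreover have "min (Sn m \<omega>) s = s" using m by simp
  ultimately show ?thesis
    using nn_integral_cost_eq_running_cost[OF \<omega> s, where k=m and c=c] by (simp add: reward_def)
qed

primrec reward_upto :: "('e \<Rightarrow> real) \<Rightarrow> ('e \<Rightarrow> real) \<Rightarrow> real \<Rightarrow> ((nat \<Rightarrow> real \<times> 'e) \<Rightarrow> enat)
    \<Rightarrow> nat \<Rightarrow> (nat \<Rightarrow> real \<times> 'e) \<Rightarrow> ennreal" where
  "reward_upto c g s \<tau> 0 \<omega> = 0"
| "reward_upto c g s \<tau> (Suc k) \<omega> = reward_upto c g s \<tau> k \<omega>
     + (if \<tau> \<omega> = enat k \<and> Sn k \<omega> < s then ennreal (g (Xn k \<omega>)) else 0)
     + (if enat k < \<tau> \<omega> then ennreal (c (Xn k \<omega>)) * ennreal (min (Sn (Suc k) \<omega>) s - min (Sn k \<omega>) s) else 0)"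

lemma reward_upto_eq:
  "reward_upto c g s \<tau> k \<omega> = (case \<tau> \<omega> of
       enat j \<Rightarrow> if j < k then running_cost c s j \<omega> + (if Sn j \<omega> < s then ennreal (g (Xn j \<omega>)) else 0)
                else running_cost c s k \<omega>
     | \<infinity> \<Rightarrow> running_cost c s k \<omega>)"
proof (induction k)
  case (Suc k)
  show ?case
  proof (cases "\<tau> \<omega>")
    case (enat j)
    then consider "j < k" | "j = k" | "k < j" by linarith
    then show ?thesis using Suc.IH enat by cases (auto simp: running_cost_Suc)
  qed (use Suc.IH in \<open>simp add: running_cost_Suc\<close>)
qed (simp add: running_cost_def split: enat.split)

lemma incseq_reward_upto: "incseq (reward_upto c g s \<tau>)"
  by (intro incseq_SucI le_funI) (simp add: add.assoc)

lemma reward_upto_le_reward: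
  assumes \<omega>: "proper_path \<omega>" and s: "0 \<le> s" and m: "s \<le> Sn m \<omega>"
  shows "reward_upto c g s \<tau> k \<omega> \<le> reward c g s \<tau> \<omega>"
proof (cases "\<tau> \<omega>")
  case (enat j)
  have "running_cost c s k \<omega> \<le> running_cost c s j \<omega>" if "\<not> j < k"
    using that by (intro running_cost_mono) simp
  then show ?thesis
    by (auto simp: reward_upto_eq enat reward_stopped[where \<tau>=\<tau>, OF \<omega> s enat] intro: add_increasing2)
next
  case infinity
  have "running_cost c s k \<omega> \<le> running_cost c s (max k m) \<omega>" by (intro running_cost_mono) simp
  moreover have "s \<le> Sn (max k m) \<omega>" using m Sn_mono[OF \<omega>, of m "max k m"] by simp
  ultimately show ?thesis by (simp add: reward_upto_eq infinity reward_never_stopped[where \<tau>=\<tau>, OF \<omega> s infinity])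
qed

lemma SUP_reward_upto:
  assumes \<omega>: "proper_path \<omega>" and s: "0 \<le> s" and m: "s \<le> Sn m \<omega>"
  shows "(SUP k. reward_upto c g s \<tau> k \<omega>) = reward c g s \<tau> \<omega>"
proof (rule antisym)
  show "(SUP k. reward_upto c g s \<tau> k \<omega>) \<le> reward c g s \<tau> \<omega>"
    by (rule SUP_least) (rule reward_upto_le_reward[OF assms])
  obtain k where "reward c g s \<tau> \<omega> = reward_upto c g s \<tau> k \<omega>"
  proof (cases "\<tau> \<omega>")
    case (enat j)
    then show ?thesis
      by (intro that[of "Suc j"]) (simp add: reward_upto_eq reward_stopped[where \<tau>=\<tau>, OF \<omega> s enat])
  next
    case infinity
    then show ?thesis
      by (intro that[of m]) (simp add: reward_upto_eq reward_never_stopped[where \<tau>=\<tau>, OF \<omega> s infinity m])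
  qed
  then show "reward c g s \<tau> \<omega> \<le> (SUP k. reward_upto c g s \<tau> k \<omega>)"
    by (metis SUP_upper UNIV_I)
qed

lemma reward_upto_measurable_Fn:
  assumes [measurable]: "c \<in> borel_measurable M" "g \<in> borel_measurable M"
    and \<tau>: "\<tau> \<in> stopping_times M" and "k \<le> n"
  shows "(\<lambda>\<omega>. reward_upto c g s \<tau> k \<omega>) \<in> borel_measurable (Fn M n)"
  using \<open>k \<le> n\<close>
proof (induction k)
  case 0
  have "reward_upto c g s \<tau> 0 = (\<lambda>_. 0)" by auto
  then show ?case by simp
next
  case (Suc k)
  then have k: "k \<le> n" "Suc k \<le> n" by auto
  note [measurable] = Suc.IH[OF k(1)] Xn_measurable_Fn[OF k(1)] Sn_measurable_Fn[OF k(1)]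
    Sn_measurable_Fn[OF k(2)] stopping_time_eq_Fn[OF \<tau> k(1)]
    measurable_Fn_mono[OF stopping_time_greater_Fn[OF \<tau>, of k] k(1)]
  show ?case unfolding reward_upto.simps by measurable
qed

definition reward_with_continuation :: "('e \<Rightarrow> real) \<Rightarrow> ('e \<Rightarrow> real) \<Rightarrow> (real \<Rightarrow> 'e \<Rightarrow> ennreal) \<Rightarrow> real
    \<Rightarrow> ((nat \<Rightarrow> real \<times> 'e) \<Rightarrow> enat) \<Rightarrow> nat \<Rightarrow> (nat \<Rightarrow> real \<times> 'e) \<Rightarrow> ennreal" where
  "reward_with_continuation c g u s \<tau> k \<omega> = reward_upto c g s \<tau> k \<omega>
     + (if enat k \<le> \<tau> \<omega> \<and> Sn k \<omega> < s then u (s - Sn k \<omega>) (Xn k \<omega>) else 0)"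

lemma reward_with_continuation_Suc:
  "reward_with_continuation c g u s \<tau> (Suc k) \<omega> = reward_upto c g s \<tau> k \<omega>
     + (if \<tau> \<omega> = enat k \<and> Sn k \<omega> < s then ennreal (g (Xn k \<omega>)) else 0)
     + (if enat k < \<tau> \<omega>
        then ennreal (c (Xn k \<omega>)) * ennreal (min (Sn k \<omega> + Tn (Suc k) \<omega>) s - min (Sn k \<omega>) s)
          + (if Sn k \<omega> + Tn (Suc k) \<omega> < s then u (s - Sn k \<omega> - Tn (Suc k) \<omega>) (Xn (Suc k) \<omega>) else 0)
        else 0)"
  by (auto simp: reward_with_continuation_def Suc_ile_eq Sn_Suc add.assoc diff_diff_eq)

section \<open>The jump chain of a semi-Markov process\<close>

locale semi_markov_process =
  fixes M :: "'e measure" and Q :: "real \<Rightarrow> 'e set \<Rightarrow> 'e \<Rightarrow> real"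
    and P :: "'e \<Rightarrow> (nat \<Rightarrow> real \<times> 'e) measure"
  assumes kernel: "semi_markov_kernel M Q"
    and laws: "semi_markov_laws M Q P"
begin

abbreviation "\<Omega> \<equiv> space (path_space M)"

lemma Q_measurable[measurable]: "0 \<le> t \<Longrightarrow> B \<in> sets M \<Longrightarrow> (\<lambda>x. Q t B x) \<in> borel_measurable M"
  using kernel unfolding semi_markov_kernel_def subprob_kernel_def by auto

lemma Q_nonneg_le_1:
  assumes "0 \<le> t" "B \<in> sets M" "x \<in> space M"
  shows "0 \<le> Q t B x" "Q t B x \<le> 1"
proof -
  obtain \<mu> where "subprob_space \<mu>" "sets \<mu> = sets M" "\<forall>B\<in>sets M. Q t B x = measure \<mu> B"
    using kernel assms unfolding semi_markov_kernel_def subprob_kernel_def by blast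
  then show "0 \<le> Q t B x" "Q t B x \<le> 1"
    using assms(2) subprob_space.subprob_measure_le_1 by auto
qed

lemma Q_0: "B \<in> sets M \<Longrightarrow> x \<in> space M \<Longrightarrow> Q 0 B x = 0"
  using kernel unfolding semi_markov_kernel_def by auto

lemma prob_space_P: "x \<in> space M \<Longrightarrow> prob_space (P x)"
  using laws unfolding semi_markov_laws_def by auto

lemma sets_P[measurable_cong]: "x \<in> space M \<Longrightarrow> sets (P x) = sets (path_space M)"
  using laws unfolding semi_markov_laws_def by auto

lemma space_P: "x \<in> space M \<Longrightarrow> space (P x) = \<Omega>"
  using sets_P by (rule sets_eq_imp_space_eq)

lemma measurable_P: "x \<in> space M \<Longrightarrow> f \<in> measurable (path_space M) K \<Longrightarrow> f \<in> measurable (P x) K"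
  using measurable_cong_sets[OF sets_P refl] by blast

lemma AE_P_start:
  assumes x: "x \<in> space M"
  shows "AE \<omega> in P x. Sn 0 \<omega> = 0 \<and> Xn 0 \<omega> = x"
proof -
  have "AE \<omega> in P x. \<omega> 0 = (0, x)" using laws x unfolding semi_markov_laws_def by auto
  then show ?thesis by eventually_elim (simp add: Sn_def Tn_def Xn_def)
qed

lemma emeasure_P_next_jump:
  "x \<in> space M \<Longrightarrow> A \<in> sets (Fn M n) \<Longrightarrow> 0 \<le> t \<Longrightarrow> B \<in> sets M \<Longrightarrow>
   emeasure (P x) (A \<inter> {\<omega>\<in>\<Omega>. Tn (Suc n) \<omega> \<le> t \<and> Xn (Suc n) \<omega> \<in> B})
     = (\<integral>\<^sup>+ \<omega>\<in>A. ennreal (Q t B (Xn n \<omega>)) \<partial>P x)"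
  using laws unfolding semi_markov_laws_def by auto

lemma emeasure_next_jump_nonpos:
  assumes x: "x \<in> space M"
  shows "emeasure (P x) {\<omega>\<in>\<Omega>. Tn (Suc n) \<omega> \<le> 0} = 0"
proof -
  have "{\<omega>\<in>\<Omega>. Tn (Suc n) \<omega> \<le> 0} = \<Omega> \<inter> {\<omega>\<in>\<Omega>. Tn (Suc n) \<omega> \<le> 0 \<and> Xn (Suc n) \<omega> \<in> space M}"
    using Xn_in_space by auto
  also have "emeasure (P x) \<dots> = (\<integral>\<^sup>+ \<omega>\<in>\<Omega>. ennreal (Q 0 (space M) (Xn n \<omega>)) \<partial>P x)"
    using sets.top[of "Fn M n"] by (intro emeasure_P_next_jump[OF x]) auto
  also have "\<dots> = 0"
    by (rule nn_integral_zero') (auto intro!: AE_I2 simp: Q_0 Xn_in_space indicator_def)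
  finally show ?thesis .
qed

lemma emeasure_next_jump_rect:
  assumes x: "x \<in> space M" and A: "A \<in> sets (Fn M n)" and B: "B \<in> sets M"
  shows "emeasure (P x) (A \<inter> {\<omega>\<in>\<Omega>. Tn (Suc n) \<omega> \<le> t \<and> Xn (Suc n) \<omega> \<in> B})
       = (\<integral>\<^sup>+ \<omega>. indicator A \<omega> * ennreal (if t < 0 then 0 else Q t B (Xn n \<omega>)) \<partial>P x)"
proof (cases "t < 0")
  case True
  have "emeasure (P x) (A \<inter> {\<omega>\<in>\<Omega>. Tn (Suc n) \<omega> \<le> t \<and> Xn (Suc n) \<omega> \<in> B})
      \<le> emeasure (P x) {\<omega>\<in>\<Omega>. Tn (Suc n) \<omega> \<le> 0}"
    using True by (intro emeasure_mono) (auto simp: sets_P[OF x])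
  then show ?thesis using True emeasure_next_jump_nonpos[OF x, of n] by simp
next
  case False
  then show ?thesis
    using emeasure_P_next_jump[OF x A _ B, of t]
    by (auto simp: nn_integral_set_ennreal mult.commute intro!: nn_integral_cong)
qed

lemma AE_proper_path:
  assumes x: "x \<in> space M"
  shows "AE \<omega> in P x. proper_path \<omega>"
proof -
  have "AE \<omega> in P x. 0 < Tn (Suc j) \<omega>" for j
    by (rule AE_I'[of "{\<omega>\<in>\<Omega>. Tn (Suc j) \<omega> \<le> 0}"])
       (auto simp: null_sets_def emeasure_next_jump_nonpos[OF x] sets_P[OF x] space_P[OF x])
  then have "AE \<omega> in P x. \<forall>j. 0 < Tn (Suc j) \<omega>"
    by (simp add: AE_all_countable)
  with AE_P_start[OF x] show ?thesis
    unfolding proper_path_def by eventually_elim (simp add: Sn_def)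
qed

lemma emeasure_first_jump:
  assumes y: "y \<in> space M" and B: "B \<in> sets M"
  shows "emeasure (distr (P y) (borel \<Otimes>\<^sub>M M) (\<lambda>\<omega>. \<omega> 1)) ({..t} \<times> B)
       = ennreal (if t < 0 then 0 else Q t B y)"
proof -
  interpret prob_space "P y" by (rule prob_space_P[OF y])
  have "emeasure (distr (P y) (borel \<Otimes>\<^sub>M M) (\<lambda>\<omega>. \<omega> 1)) ({..t} \<times> B)
      = emeasure (P y) (\<Omega> \<inter> {\<omega>\<in>\<Omega>. Tn (Suc 0) \<omega> \<le> t \<and> Xn (Suc 0) \<omega> \<in> B})"
    using B by (subst emeasure_distr)
      (auto simp: measurable_P[OF y] space_P[OF y] Tn_def Xn_def mem_Times_iff
            intro!: arg_cong[where f="emeasure (P y)"])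
  also have "\<dots> = (\<integral>\<^sup>+ \<omega>. indicator \<Omega> \<omega> * ennreal (if t < 0 then 0 else Q t B (Xn 0 \<omega>)) \<partial>P y)"
    using sets.top[of "Fn M 0"] by (intro emeasure_next_jump_rect[OF y _ B]) simp
  also have "\<dots> = (\<integral>\<^sup>+ \<omega>. ennreal (if t < 0 then 0 else Q t B y) \<partial>P y)"
  proof (rule nn_integral_cong_AE)
    show "AE \<omega> in P y. indicator \<Omega> \<omega> * ennreal (if t < 0 then 0 else Q t B (Xn 0 \<omega>))
        = ennreal (if t < 0 then 0 else Q t B y)"
      using AE_P_start[OF y] AE_space by eventually_elim (simp add: space_P[OF y])
  qed
  finally show ?thesis by (simp add: emeasure_space_1)
qed

text \<open>Since \<^const>\<open>Qmeas\<close> is a definite description, this is also where the existence of the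
  measure Q(dt,dy|y) comes from: it is the law of the first jump under P y.\<close>

lemma Qmeas_eq_distr_first_jump:
  assumes y: "y \<in> space M"
  shows "Qmeas M Q y = distr (P y) (borel \<Otimes>\<^sub>M M) (\<lambda>\<omega>. \<omega> 1)" (is "_ = ?\<mu>")
  unfolding Qmeas_def
proof (rule the_equality)
  interpret \<mu>: prob_space ?\<mu>
    by (intro prob_space.prob_space_distr[OF prob_space_P[OF y]] measurable_P[OF y]) simp
  show "sets ?\<mu> = sets (borel \<Otimes>\<^sub>M M) \<and> finite_measure ?\<mu> \<and>
    (\<forall>t. \<forall>B\<in>sets M. emeasure ?\<mu> ({..t} \<times> B) = ennreal (if t < 0 then 0 else Q t B y))"
    using emeasure_first_jump[OF y] \<mu>.finite_measure_axioms by auto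
  fix \<nu> assume \<nu>: "sets \<nu> = sets (borel \<Otimes>\<^sub>M M) \<and> finite_measure \<nu> \<and>
    (\<forall>t. \<forall>B\<in>sets M. emeasure \<nu> ({..t} \<times> B) = ennreal (if t < 0 then 0 else Q t B y))"
  interpret \<nu>: finite_measure \<nu> using \<nu> by simp
  show "\<nu> = ?\<mu>"
  proof (rule measure_eqI_generator_eq[OF Int_stable_lower_rects lower_rects_subset])
    show "X \<in> lower_rects M \<Longrightarrow> emeasure \<nu> X = emeasure ?\<mu> X" for X
      using \<nu> emeasure_first_jump[OF y] by (auto simp: lower_rects_def)
    show "sets \<nu> = sigma_sets (UNIV \<times> space M) (lower_rects M)"
      using \<nu> sets_pair_borel_lower_rects by simp
    show "sets ?\<mu> = sigma_sets (UNIV \<times> space M) (lower_rects M)"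
      using sets_pair_borel_lower_rects by simp
    show "range (\<lambda>i::nat. {..real i} \<times> space M) \<subseteq> lower_rects M"
      "(\<Union>i::nat. {..real i} \<times> space M) = UNIV \<times> space M"
      by (fact lower_rects_exhausting)+
    show "emeasure \<nu> ({..real i} \<times> space M) \<noteq> \<infinity>" for i by simp
  qed
qed

lemma sets_Qmeas[measurable_cong]: "y \<in> space M \<Longrightarrow> sets (Qmeas M Q y) = sets (borel \<Otimes>\<^sub>M M)"
  by (simp add: Qmeas_eq_distr_first_jump)

lemma space_Qmeas: "y \<in> space M \<Longrightarrow> space (Qmeas M Q y) = UNIV \<times> space M"
  using sets_eq_imp_space_eq[OF sets_Qmeas] by (simp add: space_pair_measure)

lemma prob_space_Qmeas: "y \<in> space M \<Longrightarrow> prob_space (Qmeas M Q y)"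
  unfolding Qmeas_eq_distr_first_jump
  by (intro prob_space.prob_space_distr prob_space_P measurable_P) simp_all

lemma emeasure_Qmeas_lower_rect:
  assumes "y \<in> space M" "B \<in> sets M"
  shows "emeasure (Qmeas M Q y) ({..t} \<times> B) = ennreal (if t < 0 then 0 else Q t B y)"
  unfolding Qmeas_eq_distr_first_jump[OF assms(1)] by (rule emeasure_first_jump[OF assms])

lemma AE_Qmeas_pos:
  assumes y: "y \<in> space M"
  shows "AE p in Qmeas M Q y. 0 < fst p"
proof -
  have "AE \<omega> in P y. 0 < fst (\<omega> 1)"
    using AE_proper_path[OF y] by eventually_elim (simp add: proper_path_def Tn_def)
  then show ?thesis unfolding Qmeas_eq_distr_first_jump[OF y]
    by (subst AE_distr_iff) (auto intro: measurable_P[OF y])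
qed

lemma measurable_Qmeas[measurable]: "(\<lambda>y. Qmeas M Q y) \<in> measurable M (subprob_algebra (borel \<Otimes>\<^sub>M M))"
proof (rule measurable_subprob_algebra_generated[OF sets_pair_borel_lower_rects Int_stable_lower_rects lower_rects_subset])
  show "subprob_space (Qmeas M Q y)" if "y \<in> space M" for y
    using prob_space_Qmeas[OF that] by (rule prob_space_imp_subprob_space)
  show "sets (Qmeas M Q y) = sets (borel \<Otimes>\<^sub>M M)" if "y \<in> space M" for y
    using that by (rule sets_Qmeas)
  fix A assume "A \<in> lower_rects M"
  then obtain t B where A: "A = {..t} \<times> B" "B \<in> sets M" by (auto simp: lower_rects_def)
  have "(\<lambda>y. ennreal (if t < 0 then 0 else Q t B y)) \<in> borel_measurable M"
    using A by (cases "t < 0") simp_all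
  then show "(\<lambda>y. emeasure (Qmeas M Q y) A) \<in> borel_measurable M"
    by (rule measurable_cong[THEN iffD1, rotated]) (simp add: A emeasure_Qmeas_lower_rect)
next
  show "(\<lambda>y. emeasure (Qmeas M Q y) (UNIV \<times> space M)) \<in> borel_measurable M"
    by (subst measurable_cong[where g="\<lambda>_. 1"])
       (auto simp: prob_space.emeasure_space_1[OF prob_space_Qmeas] space_Qmeas[symmetric])
qed

lemma measurable_next_jump_pair:
  assumes x: "x \<in> space M"
  shows "(\<lambda>\<omega>. (\<omega>, \<omega> (Suc n))) \<in> measurable (P x) (Fn M n \<Otimes>\<^sub>M (borel \<Otimes>\<^sub>M M))"
proof (rule measurable_Pair)
  show "(\<lambda>\<omega>. \<omega>) \<in> measurable (P x) (Fn M n)"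
    using x by (intro measurable_from_subalg[OF _ measurable_ident_sets[OF refl]])
      (auto simp: subalgebra_def sets_Fn_subset sets_P space_P)
  show "(\<lambda>\<omega>. \<omega> (Suc n)) \<in> measurable (P x) (borel \<Otimes>\<^sub>M M)"
    by (rule measurable_P[OF x]) simp
qed

lemma measurable_next_jump_kernel:
  assumes x: "x \<in> space M"
  shows "(\<lambda>\<omega>. distr (Qmeas M Q (Xn n \<omega>)) (Fn M n \<Otimes>\<^sub>M (borel \<Otimes>\<^sub>M M)) (Pair \<omega>))
           \<in> measurable (P x) (subprob_algebra (Fn M n \<Otimes>\<^sub>M (borel \<Otimes>\<^sub>M M)))"
proof -
  have "(\<lambda>\<omega>. Qmeas M Q (Xn n \<omega>)) \<in> measurable (Fn M n) (subprob_algebra (borel \<Otimes>\<^sub>M M))"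
    by (rule measurable_compose[OF Xn_measurable_Fn measurable_Qmeas]) simp
  then have "(\<lambda>\<omega>. distr (Qmeas M Q (Xn n \<omega>)) (Fn M n \<Otimes>\<^sub>M (borel \<Otimes>\<^sub>M M)) (Pair \<omega>))
      \<in> measurable (Fn M n) (subprob_algebra (Fn M n \<Otimes>\<^sub>M (borel \<Otimes>\<^sub>M M)))"
    by (rule measurable_distr2[rotated]) simp
  then show ?thesis by (rule measurable_P[OF x measurable_Fn_imp_path_space])
qed

lemma emeasure_distr_next_jump_rect:
  assumes x: "x \<in> space M" and A: "A \<in> sets (Fn M n)" and B: "B \<in> sets M"
  shows "emeasure (distr (P x) (Fn M n \<Otimes>\<^sub>M (borel \<Otimes>\<^sub>M M)) (\<lambda>\<omega>. (\<omega>, \<omega> (Suc n)))) (A \<times> ({..t} \<times> B))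
       = (\<integral>\<^sup>+ \<omega>. indicator A \<omega> * ennreal (if t < 0 then 0 else Q t B (Xn n \<omega>)) \<partial>P x)"
proof -
  have X: "A \<times> ({..t} \<times> B) \<in> sets (Fn M n \<Otimes>\<^sub>M (borel \<Otimes>\<^sub>M M))" using A B by simp
  have "emeasure (distr (P x) (Fn M n \<Otimes>\<^sub>M (borel \<Otimes>\<^sub>M M)) (\<lambda>\<omega>. (\<omega>, \<omega> (Suc n)))) (A \<times> ({..t} \<times> B))
      = emeasure (P x) (A \<inter> {\<omega>\<in>\<Omega>. Tn (Suc n) \<omega> \<le> t \<and> Xn (Suc n) \<omega> \<in> B})"
    using sets.sets_into_space[OF A]
    by (subst emeasure_distr[OF measurable_next_jump_pair[OF x] X])
      (auto simp: space_P[OF x] Tn_def Xn_def mem_Times_iff intro!: arg_cong[where f="emeasure (P x)"])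
  also have "\<dots> = (\<integral>\<^sup>+ \<omega>. indicator A \<omega> * ennreal (if t < 0 then 0 else Q t B (Xn n \<omega>)) \<partial>P x)"
    by (rule emeasure_next_jump_rect[OF x A B])
  finally show ?thesis .
qed

lemma emeasure_bind_next_jump_kernel_rect:
  assumes x: "x \<in> space M" and A: "A \<in> sets (Fn M n)" and B: "B \<in> sets M"
  shows "emeasure (P x \<bind> (\<lambda>\<omega>. distr (Qmeas M Q (Xn n \<omega>)) (Fn M n \<Otimes>\<^sub>M (borel \<Otimes>\<^sub>M M)) (Pair \<omega>)))
           (A \<times> ({..t} \<times> B))
       = (\<integral>\<^sup>+ \<omega>. indicator A \<omega> * ennreal (if t < 0 then 0 else Q t B (Xn n \<omega>)) \<partial>P x)"
proof -
  interpret prob_space "P x" by (rule prob_space_P[OF x])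
  have R: "{..t} \<times> B \<in> sets (borel \<Otimes>\<^sub>M M)" using B by simp
  have X: "A \<times> ({..t} \<times> B) \<in> sets (Fn M n \<Otimes>\<^sub>M (borel \<Otimes>\<^sub>M M))" using A R by simp
  have "emeasure (P x \<bind> (\<lambda>\<omega>. distr (Qmeas M Q (Xn n \<omega>)) (Fn M n \<Otimes>\<^sub>M (borel \<Otimes>\<^sub>M M)) (Pair \<omega>)))
          (A \<times> ({..t} \<times> B))
      = (\<integral>\<^sup>+ \<omega>. emeasure (distr (Qmeas M Q (Xn n \<omega>)) (Fn M n \<Otimes>\<^sub>M (borel \<Otimes>\<^sub>M M)) (Pair \<omega>))
            (A \<times> ({..t} \<times> B)) \<partial>P x)"
    by (rule emeasure_bind[OF not_empty measurable_next_jump_kernel[OF x] X])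
  also have "\<dots> = (\<integral>\<^sup>+ \<omega>. indicator A \<omega> * ennreal (if t < 0 then 0 else Q t B (Xn n \<omega>)) \<partial>P x)"
  proof (rule nn_integral_cong)
    fix \<omega> assume "\<omega> \<in> space (P x)"
    then have \<omega>: "\<omega> \<in> space (Fn M n)" and y: "Xn n \<omega> \<in> space M"
      using space_P[OF x] Xn_in_space by auto
    show "emeasure (distr (Qmeas M Q (Xn n \<omega>)) (Fn M n \<Otimes>\<^sub>M (borel \<Otimes>\<^sub>M M)) (Pair \<omega>)) (A \<times> ({..t} \<times> B))
        = indicator A \<omega> * ennreal (if t < 0 then 0 else Q t B (Xn n \<omega>))"
      by (simp add: emeasure_distr_Pair_Times[OF sets_Qmeas[OF y] \<omega> A R] emeasure_Qmeas_lower_rect[OF y B])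
  qed
  finally show ?thesis .
qed

text \<open>The Markov property of the jump chain at the (n+1)-st jump, as an identity of measures.\<close>

lemma distr_next_jump:
  assumes x: "x \<in> space M"
  shows "distr (P x) (Fn M n \<Otimes>\<^sub>M (borel \<Otimes>\<^sub>M M)) (\<lambda>\<omega>. (\<omega>, \<omega> (Suc n)))
       = P x \<bind> (\<lambda>\<omega>. distr (Qmeas M Q (Xn n \<omega>)) (Fn M n \<Otimes>\<^sub>M (borel \<Otimes>\<^sub>M M)) (Pair \<omega>))"
    (is "?L = ?R")
proof (rule measure_eqI_generator_eq[OF Int_stable_lower_rects_over lower_rects_over_subset[of "Fn M n" M, simplified]])
  interpret prob_space "P x" by (rule prob_space_P[OF x])
  interpret L: prob_space ?L by (rule prob_space_distr[OF measurable_next_jump_pair[OF x]])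
  show "sets ?L = sigma_sets (\<Omega> \<times> (UNIV \<times> space M)) (lower_rects_over (Fn M n) M)"
    using sets_pair_lower_rects_over[of "Fn M n" M] by simp
  have "sets ?R = sets (Fn M n \<Otimes>\<^sub>M (borel \<Otimes>\<^sub>M M))"
    by (rule sets_bind[OF _ not_empty]) simp
  then show "sets ?R = sigma_sets (\<Omega> \<times> (UNIV \<times> space M)) (lower_rects_over (Fn M n) M)"
    using sets_pair_lower_rects_over[of "Fn M n" M] by simp
  show "range (\<lambda>i::nat. \<Omega> \<times> ({..real i} \<times> space M)) \<subseteq> lower_rects_over (Fn M n) M"
    using lower_rects_exhausting(1)[of M] sets.top[of "Fn M n"] by (auto simp: lower_rects_over_def)
  show "(\<Union>i::nat. \<Omega> \<times> ({..real i} \<times> space M)) = \<Omega> \<times> (UNIV \<times> space M)"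
    using lower_rects_exhausting(2)[of M] by auto
  show "emeasure ?L (\<Omega> \<times> ({..real i} \<times> space M)) \<noteq> \<infinity>" for i
    by simp
  show "emeasure ?L X = emeasure ?R X" if "X \<in> lower_rects_over (Fn M n) M" for X
    using that emeasure_distr_next_jump_rect[OF x] emeasure_bind_next_jump_kernel_rect[OF x]
    by (auto simp: lower_rects_over_def lower_rects_def)
qed

lemma nn_integral_next_jump:
  assumes x: "x \<in> space M" and H: "H \<in> borel_measurable (Fn M n \<Otimes>\<^sub>M (borel \<Otimes>\<^sub>M M))"
  shows "(\<integral>\<^sup>+ \<omega>. H (\<omega>, \<omega> (Suc n)) \<partial>P x) = (\<integral>\<^sup>+ \<omega>. (\<integral>\<^sup>+ p. H (\<omega>, p) \<partial>Qmeas M Q (Xn n \<omega>)) \<partial>P x)"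
proof -
  have "(\<integral>\<^sup>+ \<omega>. H (\<omega>, \<omega> (Suc n)) \<partial>P x)
      = (\<integral>\<^sup>+ z. H z \<partial>distr (P x) (Fn M n \<Otimes>\<^sub>M (borel \<Otimes>\<^sub>M M)) (\<lambda>\<omega>. (\<omega>, \<omega> (Suc n))))"
    by (rule nn_integral_distr[symmetric, OF measurable_next_jump_pair[OF x]])
       (simp only: measurable_cong_sets[OF sets_distr refl] H)
  also have "\<dots> = (\<integral>\<^sup>+ \<omega>. (\<integral>\<^sup>+ z. H z \<partial>distr (Qmeas M Q (Xn n \<omega>)) (Fn M n \<Otimes>\<^sub>M (borel \<Otimes>\<^sub>M M)) (Pair \<omega>)) \<partial>P x)"
    unfolding distr_next_jump[OF x] by (rule nn_integral_bind[OF H measurable_next_jump_kernel[OF x]])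
  also have "\<dots> = (\<integral>\<^sup>+ \<omega>. (\<integral>\<^sup>+ p. H (\<omega>, p) \<partial>Qmeas M Q (Xn n \<omega>)) \<partial>P x)"
    using space_P[OF x] Xn_in_space
    by (intro nn_integral_cong nn_integral_distr_Pair[OF sets_Qmeas _ H]) auto
  finally show ?thesis .
qed

lemma nn_integral_Qmeas_later:
  assumes y: "y \<in> space M" and t: "0 \<le> t"
  shows "(\<integral>\<^sup>+ p. indicator {p. t < fst p} p \<partial>Qmeas M Q y) = ennreal (1 - Q t (space M) y)"
proof -
  interpret prob_space "Qmeas M Q y" by (rule prob_space_Qmeas[OF y])
  have "(\<integral>\<^sup>+ p. indicator {p. t < fst p} p \<partial>Qmeas M Q y)
      = (\<integral>\<^sup>+ p. indicator ((UNIV \<times> space M) - {..t} \<times> space M) p \<partial>Qmeas M Q y)"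
    by (intro nn_integral_cong) (auto simp: space_Qmeas[OF y] indicator_def)
  also have "\<dots> = emeasure (Qmeas M Q y) (UNIV \<times> space M) - emeasure (Qmeas M Q y) ({..t} \<times> space M)"
    by (subst nn_integral_indicator) (auto simp: sets_Qmeas[OF y] intro!: emeasure_Diff)
  also have "\<dots> = 1 - ennreal (Q t (space M) y)"
    using emeasure_space_1 emeasure_Qmeas_lower_rect[OF y, of "space M" t] t by (simp add: space_Qmeas[OF y])
  also have "\<dots> = ennreal (1 - Q t (space M) y)"
    using ennreal_minus[of "Q t (space M) y" 1] Q_nonneg_le_1[OF t _ y, of "space M"] by simp
  finally show ?thesis .
qed

text \<open>Fubini turns the integrated survival function into the mean truncated holding time.\<close>

lemma nn_integral_survival:
  assumes y: "y \<in> space M"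
  shows "(\<integral>\<^sup>+ t\<in>{0..r}. ennreal (1 - Q t (space M) y) \<partial>lborel)
       = (\<integral>\<^sup>+ p. ennreal (min (fst p) r) \<partial>Qmeas M Q y)"
proof -
  interpret K: prob_space "Qmeas M Q y" by (rule prob_space_Qmeas[OF y])
  interpret L: sigma_finite_measure lborel by (rule sigma_finite_lborel)
  interpret pair_sigma_finite lborel "Qmeas M Q y" ..
  let ?f = "\<lambda>t p. indicator {0..r} t * indicator {p. t < fst p} p :: ennreal"
  have f: "case_prod ?f \<in> borel_measurable (lborel \<Otimes>\<^sub>M Qmeas M Q y)"
    by (subst measurable_cong_sets[OF sets_pair_measure_cong[OF sets_lborel sets_Qmeas[OF y]] refl])
      (rule measurable_indicator_before_jump)
  have "(\<integral>\<^sup>+ t\<in>{0..r}. ennreal (1 - Q t (space M) y) \<partial>lborel)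
      = (\<integral>\<^sup>+ t. (\<integral>\<^sup>+ p. ?f t p \<partial>Qmeas M Q y) \<partial>lborel)"
  proof (rule nn_integral_cong)
    fix t :: real
    show "ennreal (1 - Q t (space M) y) * indicator {0..r} t = (\<integral>\<^sup>+ p. ?f t p \<partial>Qmeas M Q y)"
      by (cases "t \<in> {0..r}") (simp_all add: nn_integral_Qmeas_later[OF y])
  qed
  also have "\<dots> = (\<integral>\<^sup>+ p. (\<integral>\<^sup>+ t. ?f t p \<partial>lborel) \<partial>Qmeas M Q y)"
    by (rule Fubini'[OF f, symmetric])
  also have "\<dots> = (\<integral>\<^sup>+ p. ennreal (min (fst p) r) \<partial>Qmeas M Q y)"
  proof (rule nn_integral_cong_AE)
    show "AE p in Qmeas M Q y. (\<integral>\<^sup>+ t. ?f t p \<partial>lborel) = ennreal (min (fst p) r)"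
      using AE_Qmeas_pos[OF y]
    proof eventually_elim
      case (elim p)
      have "(\<integral>\<^sup>+ t. ?f t p \<partial>lborel) = (\<integral>\<^sup>+ t. indicator ({0..r} \<inter> {..<fst p}) t \<partial>lborel)"
        by (intro nn_integral_cong) (auto simp: indicator_def)
      then show ?case using emeasure_lborel_atLeastAtMost_Int_lessThan[OF elim] by simp
    qed
  qed
  finally show ?thesis .
qed

end

section \<open>Non-explosion\<close>

text \<open>If jumps of length at most \<delta> have probability at most 1 - \<epsilon>, halving a weight at every jump
  longer than \<delta> makes the expected weight after n jumps decay like (1 - \<epsilon>/2)^n. On paths whose jump
  times stay below r at most r/\<delta> jumps are long, so the weight stays above a positive constant;
  hence such paths form a null set.\<close>

definition halving_weight :: "real \<Rightarrow> nat \<Rightarrow> (nat \<Rightarrow> real \<times> 'e) \<Rightarrow> real" where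
  "halving_weight \<delta> n \<omega> = (\<Prod>j<n. if \<delta> < Tn (Suc j) \<omega> then 1/2 else 1)"

lemma halving_weight_Suc:
  "halving_weight \<delta> (Suc n) \<omega> = halving_weight \<delta> n \<omega> * (if \<delta> < Tn (Suc n) \<omega> then 1/2 else 1)"
  by (simp add: halving_weight_def)

lemma halving_weight_nonneg: "0 \<le> halving_weight \<delta> n \<omega>"
  unfolding halving_weight_def by (intro prod_nonneg) auto

lemma halving_weight_measurable_Fn: "(\<lambda>\<omega>. halving_weight \<delta> n \<omega>) \<in> borel_measurable (Fn M n)"
  unfolding halving_weight_def
proof (rule borel_measurable_prod)
  fix j assume "j \<in> {..<n}"
  then have [measurable]: "Tn (Suc j) \<in> borel_measurable (Fn M n)" by (intro Tn_measurable_Fn) simp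
  show "(\<lambda>\<omega>. if \<delta> < Tn (Suc j) \<omega> then 1/2 else (1::real)) \<in> borel_measurable (Fn M n)" by measurable
qed

lemma halving_weight_lower_bound:
  assumes \<omega>: "proper_path \<omega>" and \<delta>: "0 < \<delta>" and bounded: "Sn n \<omega> < r"
  shows "(1/2) ^ nat \<lceil>r / \<delta>\<rceil> \<le> halving_weight \<delta> n \<omega>"
proof -
  let ?long = "{..<n} \<inter> {j. \<delta> < Tn (Suc j) \<omega>}"
  have "halving_weight \<delta> n \<omega> = (\<Prod>j\<in>?long. 1/2) * (\<Prod>j\<in>{..<n} \<inter> - {j. \<delta> < Tn (Suc j) \<omega>}. 1)"
    unfolding halving_weight_def by (rule prod.If_cases) simp
  then have weight: "halving_weight \<delta> n \<omega> = (1/2) ^ card ?long" by simp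
  have "real (card ?long) * \<delta> \<le> (\<Sum>j\<in>?long. Tn (Suc j) \<omega>)"
    by (rule sum_bounded_below) auto
  also have "\<dots> \<le> (\<Sum>j<n. Tn (Suc j) \<omega>)"
    using \<omega> by (intro sum_mono2) (auto simp: proper_path_def less_imp_le)
  also have "\<dots> = Sn n \<omega>"
    using \<omega> by (simp add: Sn_def sum.atMost_shift proper_path_def)
  finally have "real (card ?long) < r / \<delta>" using \<delta> bounded by (simp add: field_simps)
  then have "card ?long \<le> nat \<lceil>r / \<delta>\<rceil>" by linarith
  then show ?thesis unfolding weight by (intro power_decreasing) auto
qed

context semi_markov_process
begin

lemma nn_integral_halving_factor:
  assumes y: "y \<in> space M" and \<delta>: "0 \<le> \<delta>"
  shows "(\<integral>\<^sup>+ p. ennreal (if \<delta> < fst p then 1/2 else 1) \<partial>Qmeas M Q y) = ennreal (1/2 + Q \<delta> (space M) y / 2)"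
proof -
  interpret prob_space "Qmeas M Q y" by (rule prob_space_Qmeas[OF y])
  have Q: "0 \<le> Q \<delta> (space M) y" using Q_nonneg_le_1[OF \<delta> _ y] by simp
  have "ennreal (1/2) + ennreal (1/2) = ennreal (1/2 + 1/2)" by (rule ennreal_plus[symmetric]) auto
  then have half: "inverse 2 + inverse 2 = (1::ennreal)" by (simp del: ennreal_plus)
  have "(\<integral>\<^sup>+ p. ennreal (if \<delta> < fst p then 1/2 else 1) \<partial>Qmeas M Q y)
      = (\<integral>\<^sup>+ p. ennreal (1/2) + ennreal (1/2) * indicator ({..\<delta>} \<times> space M) p \<partial>Qmeas M Q y)"
    by (intro nn_integral_cong) (auto simp: space_Qmeas[OF y] indicator_def half)
  also have "\<dots> = ennreal (1/2) + ennreal (1/2) * ennreal (Q \<delta> (space M) y)"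
  proof -
    have S: "{..\<delta>} \<times> space M \<in> sets (Qmeas M Q y)" by (simp add: sets_Qmeas[OF y])
    show ?thesis
      using \<delta> by (subst nn_integral_add)
        (auto simp: S nn_integral_cmult_indicator emeasure_Qmeas_lower_rect[OF y] emeasure_space_1
              intro!: borel_measurable_times_ennreal borel_measurable_indicator)
  qed
  also have "\<dots> = ennreal (1/2 + Q \<delta> (space M) y / 2)"
  proof -
    have "ennreal (Q \<delta> (space M) y / 2) = ennreal (1/2) * ennreal (Q \<delta> (space M) y)"
      using Q ennreal_mult[of "1/2" "Q \<delta> (space M) y"] by (simp add: mult.commute)
    moreover have "ennreal (1/2 + Q \<delta> (space M) y / 2) = ennreal (1/2) + ennreal (Q \<delta> (space M) y / 2)"
      using Q by (intro ennreal_plus) auto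
    ultimately show ?thesis by simp
  qed
  finally show ?thesis .
qed

lemma nn_integral_halving_weight_le:
  assumes x: "x \<in> space M" and \<delta>: "0 < \<delta>" and \<epsilon>: "\<epsilon> \<le> 1"
    and short: "\<forall>y\<in>space M. Q \<delta> (space M) y \<le> 1 - \<epsilon>"
  shows "(\<integral>\<^sup>+ \<omega>. halving_weight \<delta> n \<omega> \<partial>P x) \<le> ennreal ((1 - \<epsilon>/2) ^ n)"
proof (induction n)
  case 0
  then show ?case using prob_space.emeasure_space_1[OF prob_space_P[OF x]] by (simp add: halving_weight_def)
next
  case (Suc n)
  let ?H = "\<lambda>z::(nat \<Rightarrow> real \<times> 'e) \<times> (real \<times> 'e).
    ennreal (halving_weight \<delta> n (fst z)) * ennreal (if \<delta> < fst (snd z) then 1/2 else 1)"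
  have [measurable]: "?H \<in> borel_measurable (Fn M n \<Otimes>\<^sub>M (borel \<Otimes>\<^sub>M M))"
    using halving_weight_measurable_Fn[of \<delta> n M] by measurable
  have "(\<integral>\<^sup>+ \<omega>. halving_weight \<delta> (Suc n) \<omega> \<partial>P x) = (\<integral>\<^sup>+ \<omega>. ?H (\<omega>, \<omega> (Suc n)) \<partial>P x)"
    by (intro nn_integral_cong) (simp add: halving_weight_Suc ennreal_mult halving_weight_nonneg Tn_def)
  also have "\<dots> = (\<integral>\<^sup>+ \<omega>. (\<integral>\<^sup>+ p. ?H (\<omega>, p) \<partial>Qmeas M Q (Xn n \<omega>)) \<partial>P x)"
    by (rule nn_integral_next_jump[OF x]) measurable
  also have "\<dots> \<le> (\<integral>\<^sup>+ \<omega>. ennreal (halving_weight \<delta> n \<omega>) * ennreal (1 - \<epsilon>/2) \<partial>P x)"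
  proof (rule nn_integral_mono)
    fix \<omega> assume "\<omega> \<in> space (P x)"
    then have y: "Xn n \<omega> \<in> space M" using Xn_in_space space_P[OF x] by simp
    have "(\<integral>\<^sup>+ p. ?H (\<omega>, p) \<partial>Qmeas M Q (Xn n \<omega>))
        = ennreal (halving_weight \<delta> n \<omega>) * ennreal (1/2 + Q \<delta> (space M) (Xn n \<omega>) / 2)"
      using \<delta> by (simp add: nn_integral_cmult measurable_cong_sets[OF sets_Qmeas[OF y] refl]
          nn_integral_halving_factor[OF y])
    also have "\<dots> \<le> ennreal (halving_weight \<delta> n \<omega>) * ennreal (1 - \<epsilon>/2)"
      using short y by (intro mult_left_mono ennreal_leI) auto
    finally show "(\<integral>\<^sup>+ p. ?H (\<omega>, p) \<partial>Qmeas M Q (Xn n \<omega>)) \<le> \<dots>" .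
  qed
  also have "\<dots> = (\<integral>\<^sup>+ \<omega>. halving_weight \<delta> n \<omega> \<partial>P x) * ennreal (1 - \<epsilon>/2)"
    by (rule nn_integral_multc)
       (rule measurable_P[OF x measurable_Fn_imp_path_space], use halving_weight_measurable_Fn in measurable)
  also have "\<dots> \<le> ennreal ((1 - \<epsilon>/2) ^ n) * ennreal (1 - \<epsilon>/2)"
    by (intro mult_right_mono Suc.IH) simp
  also have "\<dots> = ennreal ((1 - \<epsilon>/2) ^ Suc n)"
    using \<epsilon> by (simp add: ennreal_mult[symmetric] mult.commute)
  finally show ?case .
qed

lemma null_sets_bounded_jump_times:
  assumes x: "x \<in> space M" and \<delta>: "0 < \<delta>" and \<epsilon>: "0 < \<epsilon>" "\<epsilon> \<le> 1"
    and short: "\<forall>y\<in>space M. Q \<delta> (space M) y \<le> 1 - \<epsilon>"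
  shows "{\<omega>\<in>\<Omega>. proper_path \<omega> \<and> (\<forall>k. Sn k \<omega> < r)} \<in> null_sets (P x)"
proof -
  interpret prob_space "P x" by (rule prob_space_P[OF x])
  let ?B = "{\<omega>\<in>\<Omega>. proper_path \<omega> \<and> (\<forall>k. Sn k \<omega> < r)}" and ?c = "(1/2::real) ^ nat \<lceil>r / \<delta>\<rceil>"
  have B: "?B \<in> sets (P x)"
    by (simp add: sets_P[OF x] proper_path_def)
  have "ennreal ?c * emeasure (P x) ?B \<le> ennreal ((1 - \<epsilon>/2) ^ n)" for n
  proof -
    have "ennreal ?c * emeasure (P x) ?B = (\<integral>\<^sup>+ \<omega>. ennreal ?c * indicator ?B \<omega> \<partial>P x)"
      by (rule nn_integral_cmult_indicator[symmetric, OF B])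
    also have "\<dots> \<le> (\<integral>\<^sup>+ \<omega>. halving_weight \<delta> n \<omega> \<partial>P x)"
      by (intro nn_integral_mono) (auto simp: indicator_def intro!: ennreal_leI halving_weight_lower_bound[OF _ \<delta>])
    also have "\<dots> \<le> ennreal ((1 - \<epsilon>/2) ^ n)"
      by (rule nn_integral_halving_weight_le[OF x \<delta> \<epsilon>(2) short])
    finally show ?thesis .
  qed
  then have "ennreal (?c * prob ?B) \<le> ennreal ((1 - \<epsilon>/2) ^ n)" for n
    by (simp add: emeasure_eq_measure ennreal_mult)
  then have "?c * prob ?B \<le> (1 - \<epsilon>/2) ^ n" for n
    using \<epsilon> by (subst (asm) ennreal_le_iff) auto
  moreover have "(\<lambda>n. (1 - \<epsilon>/2) ^ n) \<longlonglongrightarrow> 0"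
    using \<epsilon> by (intro LIMSEQ_power_zero) auto
  ultimately have "?c * prob ?B \<le> 0"
    by (intro LIMSEQ_le_const) auto
  moreover have "0 < ?c" by simp
  ultimately have "prob ?B = 0"
    using measure_nonneg[of "P x" ?B] by (auto simp: mult_le_0_iff)
  then show ?thesis using B by (simp add: null_sets_def emeasure_eq_measure)
qed

lemma AE_Sn_unbounded:
  assumes x: "x \<in> space M" and \<delta>: "0 < \<delta>" and \<epsilon>: "0 < \<epsilon>"
    and short: "\<forall>y\<in>space M. Q \<delta> (space M) y \<le> 1 - \<epsilon>"
  shows "AE \<omega> in P x. \<exists>k. r \<le> Sn k \<omega>"
proof -
  have "{\<omega>\<in>\<Omega>. proper_path \<omega> \<and> (\<forall>k. Sn k \<omega> < r)} \<in> null_sets (P x)"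
    using short \<epsilon> by (intro null_sets_bounded_jump_times[OF x \<delta>, of "min \<epsilon> 1"]) auto
  then have "AE \<omega> in P x. proper_path \<omega> \<longrightarrow> (\<exists>k. r \<le> Sn k \<omega>)"
    by (rule AE_I') (auto simp: space_P[OF x] not_le)
  with AE_proper_path[OF x] show ?thesis by eventually_elim blast
qed

end

section \<open>The dynamic programming operator\<close>

locale semi_markov_costs = semi_markov_process M Q P
  for M :: "'e measure" and Q P +
  fixes c g :: "'e \<Rightarrow> real"
  assumes c_measurable[measurable]: "c \<in> borel_measurable M"
    and g_measurable[measurable]: "g \<in> borel_measurable M"
begin

definition continue_cost :: "(real \<Rightarrow> 'e \<Rightarrow> ennreal) \<Rightarrow> real \<Rightarrow> 'e \<Rightarrow> ennreal" where
  "continue_cost u r y = ennreal (c y) * (\<integral>\<^sup>+ t\<in>{0..r}. ennreal (1 - Q t (space M) y) \<partial>lborel)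
     + (\<integral>\<^sup>+ p. indicator {0..r} (fst p) * u (r - fst p) (snd p) \<partial>Qmeas M Q y)"

lemma Gop_eq_min: "Gop M Q c g u r y = min (continue_cost u r y) (ennreal (g y))"
  by (simp add: Gop_def continue_cost_def)

lemma continue_cost_eq_nn_integral:
  assumes y: "y \<in> space M" and u: "(\<lambda>z. u (fst z) (snd z)) \<in> borel_measurable (borel \<Otimes>\<^sub>M M)"
  shows "continue_cost u r y = (\<integral>\<^sup>+ p. ennreal (c y) * ennreal (min (fst p) r)
                                    + indicator {0..r} (fst p) * u (r - fst p) (snd p) \<partial>Qmeas M Q y)"
proof -
  note sets = measurable_cong_sets[OF sets_Qmeas[OF y] refl]
  have m1: "(\<lambda>p. ennreal (c y) * ennreal (min (fst p) r)) \<in> borel_measurable (Qmeas M Q y)"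
    and m2: "(\<lambda>p. ennreal (min (fst p) r)) \<in> borel_measurable (Qmeas M Q y)"
    unfolding sets by measurable
  have m3: "(\<lambda>p. indicator {0..r} (fst p) * u (r - fst p) (snd p)) \<in> borel_measurable (Qmeas M Q y)"
    unfolding sets by (intro borel_measurable_times_ennreal measurable_uncurry_compose[OF u]) measurable
  show ?thesis
    unfolding continue_cost_def nn_integral_survival[OF y]
    by (subst nn_integral_add[OF m1 m3], subst nn_integral_cmult[OF m2]) simp
qed

lemma measurable_continue_cost:
  assumes u: "(\<lambda>z. u (fst z) (snd z)) \<in> borel_measurable (borel \<Otimes>\<^sub>M M)"
  shows "(\<lambda>z. continue_cost u (fst z) (snd z)) \<in> borel_measurable (borel \<Otimes>\<^sub>M M)"
proof -
  let ?N = "borel \<Otimes>\<^sub>M M :: (real \<times> 'e) measure"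
  have [measurable]: "(\<lambda>w. u (fst (fst w) - fst (snd w)) (snd (snd w))) \<in> borel_measurable (?N \<Otimes>\<^sub>M ?N)"
    by (rule measurable_uncurry_compose[OF u]) measurable
  have "{w \<in> space (?N \<Otimes>\<^sub>M ?N). 0 \<le> fst (snd w) \<and> fst (snd w) \<le> fst (fst w)} \<in> sets (?N \<Otimes>\<^sub>M ?N)"
    by measurable
  then have [measurable]: "(\<lambda>w. indicator {0..fst (fst w)} (fst (snd w)) :: ennreal) \<in> borel_measurable (?N \<Otimes>\<^sub>M ?N)"
    by (simp add: indicator_def borel_measurable_indicator'[unfolded indicator_def])
  have "(\<lambda>(z, p). ennreal (c (snd z)) * ennreal (min (fst p) (fst z))
      + indicator {0..fst z} (fst p) * u (fst z - fst p) (snd p)) \<in> borel_measurable (?N \<Otimes>\<^sub>M ?N)"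
    unfolding split_beta' by measurable
  moreover have "(\<lambda>z. Qmeas M Q (snd z)) \<in> measurable ?N (subprob_algebra ?N)"
    by measurable
  ultimately have "(\<lambda>z. \<integral>\<^sup>+ p. ennreal (c (snd z)) * ennreal (min (fst p) (fst z))
      + indicator {0..fst z} (fst p) * u (fst z - fst p) (snd p) \<partial>Qmeas M Q (snd z)) \<in> borel_measurable ?N"
    by (rule nn_integral_measurable_subprob_algebra2)
  then show ?thesis
    by (rule measurable_cong[THEN iffD1, rotated]) (auto simp: space_pair_measure continue_cost_eq_nn_integral[OF _ u])
qed

lemma measurable_Gop:
  "(\<lambda>z. u (fst z) (snd z)) \<in> borel_measurable (borel \<Otimes>\<^sub>M M) \<Longrightarrow>
   (\<lambda>z. Gop M Q c g u (fst z) (snd z)) \<in> borel_measurable (borel \<Otimes>\<^sub>M M)"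
  unfolding Gop_eq_min using measurable_continue_cost by measurable

lemma Gop_mono: "(\<And>r y. u r y \<le> v r y) \<Longrightarrow> Gop M Q c g u r y \<le> Gop M Q c g v r y"
  unfolding Gop_def by (intro min.mono order.refl add_mono nn_integral_mono mult_left_mono) auto

lemma Gop_at_0:
  assumes y: "y \<in> space M"
  shows "Gop M Q c g u 0 y = 0"
proof -
  have "AE t in lborel. ennreal (1 - Q t (space M) y) * indicator {0..0} t = 0"
    using AE_lborel_singleton[of "0::real"] by eventually_elim simp
  then have "(\<integral>\<^sup>+ t\<in>{0..0}. ennreal (1 - Q t (space M) y) \<partial>lborel) = 0"
    by (rule nn_integral_zero')
  moreover have "AE p in Qmeas M Q y. indicator {0..0} (fst p) * u (0 - fst p) (snd p) = 0"
    using AE_Qmeas_pos[OF y] by eventually_elim simp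
  then have "(\<integral>\<^sup>+ p. indicator {0..0} (fst p) * u (0 - fst p) (snd p) \<partial>Qmeas M Q y) = 0"
    by (rule nn_integral_zero')
  ultimately show ?thesis by (simp add: Gop_eq_min continue_cost_def)
qed

lemma continue_cost_SUP:
  assumes y: "y \<in> space M"
    and u: "\<And>n. (\<lambda>z. u n (fst z) (snd z)) \<in> borel_measurable (borel \<Otimes>\<^sub>M M)"
    and inc: "\<And>r y. incseq (\<lambda>n. u n r y)"
  shows "continue_cost (\<lambda>r y. SUP n. u n r y) r y = (SUP n. continue_cost (u n) r y)"
proof -
  let ?f = "\<lambda>n p. ennreal (c y) * ennreal (min (fst p) r) + indicator {0..r} (fst p) * u n (r - fst p) (snd p)"
  have "?f n \<in> borel_measurable (Qmeas M Q y)" for n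
    unfolding measurable_cong_sets[OF sets_Qmeas[OF y] refl]
    by (intro borel_measurable_add borel_measurable_times_ennreal measurable_uncurry_compose[OF u]) measurable
  moreover have "incseq ?f"
    using inc by (intro monoI le_funI add_mono order.refl mult_left_mono) (auto dest: monoD)
  moreover have "(\<lambda>z. SUP n. u n (fst z) (snd z)) \<in> borel_measurable (borel \<Otimes>\<^sub>M M)"
    using u by measurable
  ultimately show ?thesis
    by (simp add: continue_cost_eq_nn_integral[OF y] u nn_integral_monotone_convergence_SUP[symmetric]
        ennreal_SUP_add_right SUP_mult_left_ennreal)
qed

abbreviation V :: "nat \<Rightarrow> real \<Rightarrow> 'e \<Rightarrow> ennreal" where
  "V n \<equiv> Vn M Q c g n"

lemma Vn_0: "V 0 = (\<lambda>_ _. 0)"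
  by (simp add: Vn_def)

lemma Vn_Suc: "V (Suc n) = Gop M Q c g (V n)"
  by (simp add: Vn_def)

lemma measurable_Vn: "(\<lambda>z. V n (fst z) (snd z)) \<in> borel_measurable (borel \<Otimes>\<^sub>M M)"
  by (induction n) (simp_all add: Vn_0 Vn_Suc measurable_Gop)

lemma incseq_Vn: "incseq (\<lambda>n. V n r y)"
proof -
  have "V n r y \<le> V (Suc n) r y" for n r y
  proof (induction n arbitrary: r y)
    case (Suc n)
    then show ?case unfolding Vn_Suc[of "Suc n"] Vn_Suc[of n] by (intro Gop_mono)
  qed (simp add: Vn_0)
  then show ?thesis by (intro incseq_SucI)
qed

lemma Vn_at_0: "y \<in> space M \<Longrightarrow> V n 0 y = 0"
  by (cases n) (simp_all add: Vn_0 Vn_Suc Gop_at_0)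

definition Vlim :: "real \<Rightarrow> 'e \<Rightarrow> ennreal" where
  "Vlim r y = (SUP n. V n r y)"

lemma measurable_Vlim: "(\<lambda>z. Vlim (fst z) (snd z)) \<in> borel_measurable (borel \<Otimes>\<^sub>M M)"
  unfolding Vlim_def using measurable_Vn by measurable

lemma Vlim_at_0: "y \<in> space M \<Longrightarrow> Vlim 0 y = 0"
  by (simp add: Vlim_def Vn_at_0)

lemma Gop_Vlim:
  assumes y: "y \<in> space M"
  shows "Gop M Q c g Vlim r y = Vlim r y"
proof -
  have "Gop M Q c g Vlim r y = inf (ennreal (g y)) (SUP n. continue_cost (V n) r y)"
    unfolding Gop_eq_min Vlim_def[abs_def]
    by (simp add: continue_cost_SUP[OF y measurable_Vn incseq_Vn] inf_min min.commute)
  also have "\<dots> = (SUP n. V (Suc n) r y)"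
    by (subst inf_SUP) (simp add: Vn_Suc Gop_eq_min inf_min min.commute)
  also have "\<dots> = Vlim r y"
    unfolding Vlim_def
  proof (rule antisym)
    show "(SUP n. V (Suc n) r y) \<le> (SUP n. V n r y)"
      by (rule SUP_mono) blast
    show "(SUP n. V n r y) \<le> (SUP n. V (Suc n) r y)"
      by (rule SUP_mono) (use incseq_Vn in \<open>blast dest: incseq_SucD\<close>)
  qed
  finally show ?thesis .
qed

lemma nn_integral_reward_with_continuation_0:
  assumes x: "x \<in> space M" and s: "0 \<le> s" and u0: "u 0 x = 0"
  shows "(\<integral>\<^sup>+ \<omega>. reward_with_continuation c g u s \<tau> 0 \<omega> \<partial>P x) = u s x"
proof -
  interpret prob_space "P x" by (rule prob_space_P[OF x])
  have "AE \<omega> in P x. reward_with_continuation c g u s \<tau> 0 \<omega> = u s x"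
    using AE_P_start[OF x] by eventually_elim
      (use s u0 in \<open>auto simp: reward_with_continuation_def zero_enat_def[symmetric]\<close>)
  then show ?thesis by (simp add: nn_integral_cong_AE emeasure_space_1)
qed

lemma nn_integral_continue_after:
  assumes y: "y \<in> space M" and u: "(\<lambda>z. u (fst z) (snd z)) \<in> borel_measurable (borel \<Otimes>\<^sub>M M)"
    and u0: "\<forall>y\<in>space M. u 0 y = 0"
  shows "(\<integral>\<^sup>+ p. ennreal (c y) * ennreal (min (a + fst p) s - min a s)
            + (if a + fst p < s then u (s - a - fst p) (snd p) else 0) \<partial>Qmeas M Q y)
       = (if a < s then continue_cost u (s - a) y else 0)"
proof (cases "a < s")
  case True
  have "AE p in Qmeas M Q y. ennreal (c y) * ennreal (min (a + fst p) s - min a s)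
          + (if a + fst p < s then u (s - a - fst p) (snd p) else 0)
        = ennreal (c y) * ennreal (min (fst p) (s - a))
          + indicator {0..s - a} (fst p) * u (s - a - fst p) (snd p)"
    using AE_Qmeas_pos[OF y] AE_space
  proof eventually_elim
    case (elim p)
    then have "snd p \<in> space M" by (simp add: space_Qmeas[OF y] mem_Times_iff)
    moreover have "min (a + fst p) s - min a s = min (fst p) (s - a)" using True by (simp add: min_def)
    ultimately show ?case using elim u0 by (cases "fst p = s - a") (auto simp: indicator_def)
  qed
  then show ?thesis
    using True by (simp add: nn_integral_cong_AE continue_cost_eq_nn_integral[OF y u])
next
  case False
  have "AE p in Qmeas M Q y. ennreal (c y) * ennreal (min (a + fst p) s - min a s)
          + (if a + fst p < s then u (s - a - fst p) (snd p) else 0) = 0"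
    using AE_Qmeas_pos[OF y] by eventually_elim (use False in simp)
  from nn_integral_zero'[OF this] show ?thesis using False by (simp only: if_False)
qed

lemma nn_integral_reward_with_continuation_Suc:
  assumes x: "x \<in> space M" and \<tau>: "\<tau> \<in> stopping_times M"
    and u: "(\<lambda>z. u (fst z) (snd z)) \<in> borel_measurable (borel \<Otimes>\<^sub>M M)" and u0: "\<forall>y\<in>space M. u 0 y = 0"
  shows "(\<integral>\<^sup>+ \<omega>. reward_with_continuation c g u s \<tau> (Suc k) \<omega> \<partial>P x)
       = (\<integral>\<^sup>+ \<omega>. reward_upto c g s \<tau> k \<omega>
              + (if \<tau> \<omega> = enat k \<and> Sn k \<omega> < s then ennreal (g (Xn k \<omega>)) else 0)
              + (if enat k < \<tau> \<omega> \<and> Sn k \<omega> < s then continue_cost u (s - Sn k \<omega>) (Xn k \<omega>) else 0) \<partial>P x)"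
proof -
  define A where "A \<omega> = reward_upto c g s \<tau> k \<omega>
    + (if \<tau> \<omega> = enat k \<and> Sn k \<omega> < s then ennreal (g (Xn k \<omega>)) else 0)" for \<omega>
  define F where "F \<omega> p = ennreal (c (Xn k \<omega>)) * ennreal (min (Sn k \<omega> + fst p) s - min (Sn k \<omega>) s)
    + (if Sn k \<omega> + fst p < s then u (s - Sn k \<omega> - fst p) (snd p) else 0)" for \<omega> p
  define H where "H z = A (fst z) + (if enat k < \<tau> (fst z) then F (fst z) (snd z) else 0)" for z
  note [measurable] = Sn_measurable_Fn[of k k] Xn_measurable_Fn[of k k] stopping_time_eq_Fn[OF \<tau>, of k k]
    reward_upto_measurable_Fn[OF c_measurable g_measurable \<tau>, of k k]
  have [measurable]: "Measurable.pred (Fn M k \<Otimes>\<^sub>M (borel \<Otimes>\<^sub>M M)) (\<lambda>z. enat k < \<tau> (fst z))"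
    using stopping_time_greater_Fn[OF \<tau>, of k] by measurable
  have [measurable]: "(\<lambda>z. u (s - Sn k (fst z) - fst (snd z)) (snd (snd z)))
      \<in> borel_measurable (Fn M k \<Otimes>\<^sub>M (borel \<Otimes>\<^sub>M M))"
    by (rule measurable_uncurry_compose[OF u]) measurable
  have H: "H \<in> borel_measurable (Fn M k \<Otimes>\<^sub>M (borel \<Otimes>\<^sub>M M))"
    unfolding H_def A_def F_def by measurable
  have "(\<integral>\<^sup>+ \<omega>. reward_with_continuation c g u s \<tau> (Suc k) \<omega> \<partial>P x) = (\<integral>\<^sup>+ \<omega>. H (\<omega>, \<omega> (Suc k)) \<partial>P x)"
    by (intro nn_integral_cong) (auto simp: reward_with_continuation_Suc H_def A_def F_def Tn_def Xn_def)
  also have "\<dots> = (\<integral>\<^sup>+ \<omega>. (\<integral>\<^sup>+ p. H (\<omega>, p) \<partial>Qmeas M Q (Xn k \<omega>)) \<partial>P x)"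
    by (rule nn_integral_next_jump[OF x H])
  also have "\<dots> = (\<integral>\<^sup>+ \<omega>. A \<omega> + (if enat k < \<tau> \<omega> \<and> Sn k \<omega> < s then continue_cost u (s - Sn k \<omega>) (Xn k \<omega>) else 0) \<partial>P x)"
  proof (rule nn_integral_cong)
    fix \<omega> assume "\<omega> \<in> space (P x)"
    then have y: "Xn k \<omega> \<in> space M" using space_P[OF x] Xn_in_space by auto
    interpret prob_space "Qmeas M Q (Xn k \<omega>)" by (rule prob_space_Qmeas[OF y])
    have [measurable]: "(\<lambda>p. u (s - Sn k \<omega> - fst p) (snd p)) \<in> borel_measurable (borel \<Otimes>\<^sub>M M)"
      by (rule measurable_uncurry_compose[OF u]) measurable
    have "F \<omega> \<in> borel_measurable (Qmeas M Q (Xn k \<omega>))"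
      unfolding F_def measurable_cong_sets[OF sets_Qmeas[OF y] refl] by measurable
    then have "(\<integral>\<^sup>+ p. H (\<omega>, p) \<partial>Qmeas M Q (Xn k \<omega>))
        = A \<omega> + (if enat k < \<tau> \<omega> then \<integral>\<^sup>+ p. F \<omega> p \<partial>Qmeas M Q (Xn k \<omega>) else 0)"
      by (cases "enat k < \<tau> \<omega>") (simp_all add: H_def nn_integral_add emeasure_space_1)
    then show "(\<integral>\<^sup>+ p. H (\<omega>, p) \<partial>Qmeas M Q (Xn k \<omega>))
        = A \<omega> + (if enat k < \<tau> \<omega> \<and> Sn k \<omega> < s then continue_cost u (s - Sn k \<omega>) (Xn k \<omega>) else 0)"
      unfolding F_def nn_integral_continue_after[OF y u u0] by simp
  qed
  finally show ?thesis by (simp add: A_def)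
qed

lemma nn_integral_reward_with_continuation_le_Suc:
  assumes x: "x \<in> space M" and \<tau>: "\<tau> \<in> stopping_times M"
    and u: "(\<lambda>z. u (fst z) (snd z)) \<in> borel_measurable (borel \<Otimes>\<^sub>M M)" and u0: "\<forall>y\<in>space M. u 0 y = 0"
    and w: "\<And>r y. y \<in> space M \<Longrightarrow> w r y \<le> Gop M Q c g u r y"
  shows "(\<integral>\<^sup>+ \<omega>. reward_with_continuation c g w s \<tau> k \<omega> \<partial>P x)
       \<le> (\<integral>\<^sup>+ \<omega>. reward_with_continuation c g u s \<tau> (Suc k) \<omega> \<partial>P x)"
  unfolding nn_integral_reward_with_continuation_Suc[OF x \<tau> u u0]
proof (rule nn_integral_mono)
  fix \<omega> assume "\<omega> \<in> space (P x)"
  then have y: "Xn k \<omega> \<in> space M" using space_P[OF x] Xn_in_space by auto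
  have "enat k \<le> \<tau> \<omega> \<longleftrightarrow> \<tau> \<omega> = enat k \<or> enat k < \<tau> \<omega>" by auto
  then show "reward_with_continuation c g w s \<tau> k \<omega>
      \<le> reward_upto c g s \<tau> k \<omega> + (if \<tau> \<omega> = enat k \<and> Sn k \<omega> < s then ennreal (g (Xn k \<omega>)) else 0)
        + (if enat k < \<tau> \<omega> \<and> Sn k \<omega> < s then continue_cost u (s - Sn k \<omega>) (Xn k \<omega>) else 0)"
    using w[OF y, of "s - Sn k \<omega>"]
    by (auto simp: reward_with_continuation_def Gop_eq_min add.assoc intro: add_left_mono)
qed

lemma Gop_cong:
  assumes x: "x \<in> space M" and uv: "\<And>r y. 0 \<le> r \<Longrightarrow> r \<le> s \<Longrightarrow> y \<in> space M \<Longrightarrow> u r y = v r y"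
  shows "Gop M Q c g u s x = Gop M Q c g v s x"
  unfolding Gop_def using uv
  by (intro arg_cong2[where f=min] arg_cong2[where f="(+)"] refl nn_integral_cong)
     (auto simp: space_Qmeas[OF x] indicator_def)

end

section \<open>Optimal stopping\<close>

locale semi_markov_stopping = semi_markov_costs M Q P c g
  for M :: "'e measure" and Q P c g +
  assumes regular: "\<exists>\<delta>>0. \<exists>\<epsilon>>0. \<forall>x\<in>space M. Q \<delta> (space M) x \<le> 1 - \<epsilon>"
begin

lemma AE_proper_path_reaching:
  assumes x: "x \<in> space M"
  shows "AE \<omega> in P x. proper_path \<omega> \<and> (\<exists>k. s \<le> Sn k \<omega>)"
proof -
  obtain \<delta> \<epsilon> where "0 < \<delta>" "0 < \<epsilon>" "\<forall>y\<in>space M. Q \<delta> (space M) y \<le> 1 - \<epsilon>"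
    using regular by blast
  then have "AE \<omega> in P x. \<exists>k. s \<le> Sn k \<omega>" by (rule AE_Sn_unbounded[OF x])
  with AE_proper_path[OF x] show ?thesis by eventually_elim blast
qed

lemma nn_integral_reward_upto_le_Vtau:
  assumes x: "x \<in> space M" and s: "0 \<le> s"
  shows "(\<integral>\<^sup>+ \<omega>. reward_upto c g s \<tau> k \<omega> \<partial>P x) \<le> Vtau P c g \<tau> s x"
  unfolding Vtau_def
proof (rule nn_integral_mono_AE)
  show "AE \<omega> in P x. reward_upto c g s \<tau> k \<omega> \<le> reward c g s \<tau> \<omega>"
    using AE_proper_path_reaching[OF x, of s] by eventually_elim (auto intro: reward_upto_le_reward[OF _ s])
qed

lemma Vtau_eq_SUP_reward_upto:
  assumes x: "x \<in> space M" and s: "0 \<le> s" and \<tau>: "\<tau> \<in> stopping_times M"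
  shows "Vtau P c g \<tau> s x = (SUP k. \<integral>\<^sup>+ \<omega>. reward_upto c g s \<tau> k \<omega> \<partial>P x)"
proof -
  have "Vtau P c g \<tau> s x = (\<integral>\<^sup>+ \<omega>. (SUP k. reward_upto c g s \<tau> k \<omega>) \<partial>P x)"
    unfolding Vtau_def
  proof (rule nn_integral_cong_AE)
    show "AE \<omega> in P x. reward c g s \<tau> \<omega> = (SUP k. reward_upto c g s \<tau> k \<omega>)"
      using AE_proper_path_reaching[OF x, of s] by eventually_elim (metis SUP_reward_upto[OF _ s])
  qed
  also have "\<dots> = (SUP k. \<integral>\<^sup>+ \<omega>. reward_upto c g s \<tau> k \<omega> \<partial>P x)"
    using reward_upto_measurable_Fn[OF c_measurable g_measurable \<tau> order.refl]
    by (intro nn_integral_monotone_convergence_SUP incseq_reward_upto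
        measurable_P[OF x measurable_Fn_imp_path_space])
  finally show ?thesis .
qed

lemma Vn_le_Vtau:
  assumes x: "x \<in> space M" and s: "0 \<le> s" and \<tau>: "\<tau> \<in> stopping_times M"
  shows "V n s x \<le> Vtau P c g \<tau> s x"
proof -
  let ?Z = "\<lambda>k. \<integral>\<^sup>+ \<omega>. reward_with_continuation c g (V (n - k)) s \<tau> k \<omega> \<partial>P x"
  have "V n s x \<le> ?Z k" if "k \<le> n" for k
    using that
  proof (induction k)
    case 0
    then show ?case using nn_integral_reward_with_continuation_0[where u="V n" and \<tau>=\<tau>, OF x s Vn_at_0[OF x]] by simp
  next
    case (Suc k)
    then have "n - k = Suc (n - Suc k)" by simp
    then have "?Z k \<le> ?Z (Suc k)"
      by (intro nn_integral_reward_with_continuation_le_Suc[OF x \<tau> measurable_Vn]) (simp_all add: Vn_at_0 Vn_Suc)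
    with Suc show ?case by simp
  qed
  from this[of n] have "V n s x \<le> ?Z n" by simp
  also have "?Z n = (\<integral>\<^sup>+ \<omega>. reward_upto c g s \<tau> n \<omega> \<partial>P x)"
    by (simp add: reward_with_continuation_def Vn_0)
  also have "\<dots> \<le> Vtau P c g \<tau> s x"
    by (rule nn_integral_reward_upto_le_Vtau[OF x s])
  finally show ?thesis .
qed

definition stop_now :: "real \<Rightarrow> nat \<Rightarrow> (nat \<Rightarrow> real \<times> 'e) \<Rightarrow> bool" where
  "stop_now s k \<omega> \<longleftrightarrow> ennreal (g (Xn k \<omega>)) \<le> continue_cost Vlim (s - Sn k \<omega>) (Xn k \<omega>)"

definition optimal_stop :: "real \<Rightarrow> (nat \<Rightarrow> real \<times> 'e) \<Rightarrow> enat" where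
  "optimal_stop s \<omega> = (if \<exists>k. stop_now s k \<omega> then enat (LEAST k. stop_now s k \<omega>) else \<infinity>)"

lemma stop_now_measurable_Fn:
  assumes "k \<le> n"
  shows "{\<omega> \<in> \<Omega>. stop_now s k \<omega>} \<in> sets (Fn M n)"
proof -
  note [measurable] = Sn_measurable_Fn[OF assms] Xn_measurable_Fn[OF assms]
  have [measurable]: "(\<lambda>\<omega>. continue_cost Vlim (s - Sn k \<omega>) (Xn k \<omega>)) \<in> borel_measurable (Fn M n)"
    by (rule measurable_uncurry_compose[OF measurable_continue_cost[OF measurable_Vlim]]) measurable
  have "{\<omega> \<in> space (Fn M n). ennreal (g (Xn k \<omega>)) \<le> continue_cost Vlim (s - Sn k \<omega>) (Xn k \<omega>)}
      \<in> sets (Fn M n)"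
    by (rule borel_measurable_le) measurable
  then show ?thesis by (simp add: stop_now_def)
qed

lemma optimal_stop_eq_enat_iff:
  "optimal_stop s \<omega> = enat n \<longleftrightarrow> stop_now s n \<omega> \<and> (\<forall>k<n. \<not> stop_now s k \<omega>)"
proof
  assume stop: "optimal_stop s \<omega> = enat n"
  then have ex: "\<exists>k. stop_now s k \<omega>"
    unfolding optimal_stop_def by (metis enat.distinct(2))
  with stop have least: "(LEAST k. stop_now s k \<omega>) = n"
    by (simp add: optimal_stop_def)
  show "stop_now s n \<omega> \<and> (\<forall>k<n. \<not> stop_now s k \<omega>)"
    using LeastI_ex[OF ex] not_less_Least[where P="\<lambda>k. stop_now s k \<omega>"] unfolding least by blast
next
  assume first: "stop_now s n \<omega> \<and> (\<forall>k<n. \<not> stop_now s k \<omega>)"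
  then have "(LEAST k. stop_now s k \<omega>) = n"
    by (intro Least_equality) (auto simp: not_less[symmetric])
  moreover have "\<exists>k. stop_now s k \<omega>" using first by blast
  ultimately show "optimal_stop s \<omega> = enat n" by (simp add: optimal_stop_def)
qed

lemma optimal_stop_stopping_time: "optimal_stop s \<in> stopping_times M"
  unfolding stopping_times_def
proof (intro CollectI allI)
  fix n
  have "{\<omega>\<in>\<Omega>. optimal_stop s \<omega> = enat n}
      = {\<omega>\<in>\<Omega>. stop_now s n \<omega>} - (\<Union>k\<in>{..<n}. {\<omega>\<in>\<Omega>. stop_now s k \<omega>})"
    by (auto simp: optimal_stop_eq_enat_iff)
  also have "\<dots> \<in> sets (Fn M n)"
    by (intro sets.Diff sets.finite_UN stop_now_measurable_Fn) auto
  finally show "{\<omega>\<in>\<Omega>. optimal_stop s \<omega> = enat n} \<in> sets (Fn M n)" .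
qed

lemma not_stop_now_before_optimal_stop: "enat k < optimal_stop s \<omega> \<Longrightarrow> \<not> stop_now s k \<omega>"
proof
  assume before: "enat k < optimal_stop s \<omega>" and stop: "stop_now s k \<omega>"
  from stop have "(LEAST k. stop_now s k \<omega>) \<le> k" by (rule Least_le)
  then show False using before stop by (auto simp: optimal_stop_def split: if_splits)
qed

lemma optimal_stop_step_le:
  assumes y: "Xn k \<omega> \<in> space M"
  shows "reward_upto c g s (optimal_stop s) k \<omega>
      + (if optimal_stop s \<omega> = enat k \<and> Sn k \<omega> < s then ennreal (g (Xn k \<omega>)) else 0)
      + (if enat k < optimal_stop s \<omega> \<and> Sn k \<omega> < s then continue_cost Vlim (s - Sn k \<omega>) (Xn k \<omega>) else 0)
    \<le> reward_with_continuation c g Vlim s (optimal_stop s) k \<omega>"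
proof -
  have Vlim: "Vlim r (Xn k \<omega>) = min (continue_cost Vlim r (Xn k \<omega>)) (ennreal (g (Xn k \<omega>)))" for r
    using Gop_Vlim[OF y, of r] by (simp add: Gop_eq_min)
  consider (stop) "optimal_stop s \<omega> = enat k" | (continue) "enat k < optimal_stop s \<omega>"
    | (stopped) "optimal_stop s \<omega> < enat k"
    using less_linear by blast
  then show ?thesis
  proof cases
    case stop
    then have "stop_now s k \<omega>" by (simp add: optimal_stop_eq_enat_iff)
    then show ?thesis using stop by (simp add: reward_with_continuation_def Vlim stop_now_def min_absorb2)
  next
    case continue
    then have "\<not> stop_now s k \<omega>" by (rule not_stop_now_before_optimal_stop)
    then have "continue_cost Vlim (s - Sn k \<omega>) (Xn k \<omega>) \<le> ennreal (g (Xn k \<omega>))"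
      by (simp add: stop_now_def)
    then have "Vlim (s - Sn k \<omega>) (Xn k \<omega>) = continue_cost Vlim (s - Sn k \<omega>) (Xn k \<omega>)"
      by (simp add: Vlim min_absorb1)
    moreover have "(optimal_stop s \<omega> = enat k) = False" "(enat k < optimal_stop s \<omega>) = True"
      "(enat k \<le> optimal_stop s \<omega>) = True"
      using continue by simp_all
    ultimately show ?thesis
      by (simp only: reward_with_continuation_def if_False if_True simp_thms) simp
  next
    case stopped
    then have "optimal_stop s \<omega> \<noteq> enat k" "\<not> enat k < optimal_stop s \<omega>" by auto
    then show ?thesis by (simp add: reward_with_continuation_def)
  qed
qed

lemma nn_integral_reward_with_continuation_optimal_Suc_le:
  assumes x: "x \<in> space M"
  shows "(\<integral>\<^sup>+ \<omega>. reward_with_continuation c g Vlim s (optimal_stop s) (Suc k) \<omega> \<partial>P x)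
       \<le> (\<integral>\<^sup>+ \<omega>. reward_with_continuation c g Vlim s (optimal_stop s) k \<omega> \<partial>P x)"
proof -
  have Vlim_0: "\<forall>y\<in>space M. Vlim 0 y = 0" by (simp add: Vlim_at_0)
  show ?thesis
    unfolding nn_integral_reward_with_continuation_Suc[OF x optimal_stop_stopping_time measurable_Vlim Vlim_0]
    using space_P[OF x] Xn_in_space by (intro nn_integral_mono optimal_stop_step_le) auto
qed

lemma Vtau_optimal_stop_le_Vlim:
  assumes x: "x \<in> space M" and s: "0 \<le> s"
  shows "Vtau P c g (optimal_stop s) s x \<le> Vlim s x"
proof -
  let ?Z = "\<lambda>k. \<integral>\<^sup>+ \<omega>. reward_with_continuation c g Vlim s (optimal_stop s) k \<omega> \<partial>P x"
  have Z: "?Z k \<le> Vlim s x" for k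
  proof (induction k)
    case 0
    then show ?case using nn_integral_reward_with_continuation_0[where u=Vlim and \<tau>="optimal_stop s", OF x s Vlim_at_0[OF x]] by simp
  next
    case (Suc k)
    then show ?case using nn_integral_reward_with_continuation_optimal_Suc_le[OF x, of s k] by simp
  qed
  have "(\<integral>\<^sup>+ \<omega>. reward_upto c g s (optimal_stop s) k \<omega> \<partial>P x) \<le> Vlim s x" for k
    using Z[of k] by (rule order_trans[rotated]) (intro nn_integral_mono, simp add: reward_with_continuation_def)
  then show ?thesis
    by (simp add: Vtau_eq_SUP_reward_upto[OF x s optimal_stop_stopping_time] SUP_least)
qed

lemma Vstar_eq_Vlim:
  assumes x: "x \<in> space M" and s: "0 \<le> s"
  shows "Vstar M P c g s x = Vlim s x"
proof (rule antisym)
  show "Vstar M P c g s x \<le> Vlim s x"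
    unfolding Vstar_def
    by (rule INF_lower2[OF optimal_stop_stopping_time]) (rule Vtau_optimal_stop_le_Vlim[OF x s])
  show "Vlim s x \<le> Vstar M P c g s x"
    unfolding Vstar_def Vlim_def by (intro INF_greatest SUP_least Vn_le_Vtau[OF x s])
qed

end

text \<open>Nor is the nonnegativity of c and g, which enter only through
  \<^const>\<open>ennreal\<close>.\<close>

theorem theorem4p3:
  fixes E :: "'e::polish_space set" and M :: "'e measure"
    and Q :: "real \<Rightarrow> 'e set \<Rightarrow> 'e \<Rightarrow> real"
    and P :: "'e \<Rightarrow> (nat \<Rightarrow> real \<times> 'e) measure"
    and c g :: "'e \<Rightarrow> real" and T :: real
  assumes E: "E \<in> sets borel"
    and M: "M = restrict_space borel E"
    and Q: "semi_markov_kernel M Q"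
    and reg: "\<exists>\<delta>>0. \<exists>\<epsilon>>0. \<forall>x\<in>space M. Q \<delta> (space M) x \<le> 1 - \<epsilon>"
    and c: "c \<in> borel_measurable M" "\<forall>x\<in>space M. 0 \<le> c x"
    and g: "g \<in> borel_measurable M" "\<forall>x\<in>space M. 0 \<le> g x"
    and T: "0 \<le> T"
    and P: "semi_markov_laws M Q P"
  shows "(\<forall>s\<in>{0..T}. \<forall>x\<in>space M. (\<lambda>n. Vn M Q c g n s x) \<longlonglongrightarrow> Vstar M P c g s x)
       \<and> (\<forall>s\<in>{0..T}. \<forall>x\<in>space M. Vstar M P c g s x = Gop M Q c g (Vstar M P c g) s x)"
proof -
  interpret semi_markov_stopping M Q P c g
    using Q P reg c g by unfold_locales auto
  show ?thesis
  proof (intro conjI ballI)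
    fix s x assume s: "s \<in> {0..T}" and x: "x \<in> space M"
    show "(\<lambda>n. V n s x) \<longlonglongrightarrow> Vstar M P c g s x"
      using s LIMSEQ_SUP[OF incseq_Vn] by (simp add: Vstar_eq_Vlim[OF x] Vlim_def)
    have "Gop M Q c g (Vstar M P c g) s x = Gop M Q c g Vlim s x"
      by (rule Gop_cong[OF x]) (simp add: Vstar_eq_Vlim)
    then show "Vstar M P c g s x = Gop M Q c g (Vstar M P c g) s x"
      using s by (simp add: Gop_Vlim[OF x] Vstar_eq_Vlim[OF x])
  qed
qed

end
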